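(* Let $f:[0,\infty)\to[0,\infty)$ be non-increasing with $f(0)=1$ and $f\in C^4([0,\infty))$, let $\mathcal L(\gamma)=\int_0^\infty e^{-\gamma x}f(x)dx$ and $\gamma_{\min}=\inf\{\gamma\in\mathbb R:\mathcal L(\gamma)<\infty\}$, and assume that for every $\gamma>\gamma_{\min}$ and $j=0,1,2,3,4$, $e^{-\gamma x}f^{(j)}(x)\in L^1([0,\infty))$ and $e^{-\gamma x}f^{(j)}(x)\to0$ as $x\to\infty$. For $s\ge1$ and $\rho=1-\gamma/\sqrt s$ define $F_s(\rho)=\sum_{n=0}^\infty f\bigl(\tfrac{n+1}{\sqrt s}\bigr)\rho^{n+1}$. Then for $\gamma_{\min}<\gamma\le\sqrt s$, $F_s(\rho)=\sqrt s\,\mathcal L(\gamma)+\mathcal M(\gamma)+O(1/\sqrt s)$, with $\mathcal M(\gamma)=\tfrac12\gamma^2\mathcal L'(\gamma)-\tfrac12$, where the $O(1/\sqrt s)$ holds uniformly in $\gamma$ in any compact subset of $(\gamma_{\min},\infty)$. Moreover, to leading order this $O(1/\sqrt s)$ term equals $\mathcal N(\gamma)/\sqrt s$, where $\mathcal N(\gamma)=\tfrac13\gamma^3\mathcal L'(\gamma)+\tfrac18\gamma^4\mathcal L''(\gamma)+\tfrac1{12}(\gamma-f'(0))$.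
   Context: $F_s(\rho)$ is the quantity $\sum_{n\ge0}p_s(0)\cdots p_s(n)\rho^{n+1}$ for an $s$-server system with admission control under the global control $p_s(0)\cdots p_s(n)=f((n+1)/\sqrt s)$. *)

theory Defs
  imports "HOL-Analysis.Analysis"
begin

text \<open>Laplace transform of f on [0,oo) as an extended nonnegative integral
  (used to decide finiteness) and as a real-valued (Lebesgue) integral.\<close>

definition Lap_nn :: "(real \<Rightarrow> real) \<Rightarrow> real \<Rightarrow> ennreal" where
  "Lap_nn f \<gamma> = (\<integral>\<^sup>+ x. ennreal (exp (- \<gamma> * x) * f x) * indicator {0..} x \<partial>lborel)"

definition Lap :: "(real \<Rightarrow> real) \<Rightarrow> real \<Rightarrow> real" where
  "Lap f \<gamma> = (LINT x:{0..}|lborel. exp (- \<gamma> * x) * f x)"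

definition gamma_min :: "(real \<Rightarrow> real) \<Rightarrow> ereal" where
  "gamma_min f = Inf {ereal \<gamma> | \<gamma>. Lap_nn f \<gamma> < \<infinity>}"

definition Fs :: "(real \<Rightarrow> real) \<Rightarrow> real \<Rightarrow> real \<Rightarrow> real" where
  "Fs f s \<rho> = (\<Sum>n. f (real (n + 1) / sqrt s) * \<rho> ^ (n + 1))"

definition Mcal :: "(real \<Rightarrow> real) \<Rightarrow> real \<Rightarrow> real" where
  "Mcal f \<gamma> = 1/2 * \<gamma>^2 * deriv (Lap f) \<gamma> - 1/2"

definition Ncal :: "(real \<Rightarrow> real) \<Rightarrow> real \<Rightarrow> real \<Rightarrow> real" where
  "Ncal f f'0 \<gamma> = 1/3 * \<gamma>^3 * deriv (Lap f) \<gamma> + 1/8 * \<gamma>^4 * deriv (deriv (Lap f)) \<gamma>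
      + 1/12 * (\<gamma> - f'0)"

end

theory Submission
  imports Defs
begin

text \<open>Write \<open>h = 1 / sqrt s\<close> and \<open>1 - \<gamma> * h = exp (- \<beta> * h)\<close>. Then \<open>F\<^sub>s(\<rho>)\<close> is the
  right-endpoint Riemann sum with step \<open>h\<close> of \<open>g x = exp (- \<beta> * x) * f x\<close>, and the
  Euler--Maclaurin formula with a fourth-order Peano remainder gives
  \<open>h * F\<^sub>s(\<rho>) = L(\<beta>) - h/2 - h\<^sup>2/12 * (f'(0) - \<beta>) + O(h\<^sup>4)\<close>, the remainder being bounded
  by the integral of the fourth derivative of \<open>g\<close>. Since \<open>\<beta> = \<gamma> + h * D\<close> with
  \<open>D = \<gamma>\<^sup>2/2 + \<gamma>\<^sup>3 * h/3 + O(h\<^sup>2)\<close>, the second-order Taylor expansion of \<open>L\<close> at \<open>\<gamma>\<close>, whose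
  coefficients are the moments of \<open>exp (- \<gamma> * x) * f x\<close>, yields \<open>M(\<gamma>)\<close> and \<open>N(\<gamma>)\<close>.
  All error terms are bounded by moments at the left end of the compact set of rates, which
  makes the estimate uniform; when \<open>h\<close> is too large for the expansion, a crude comparison of
  the sum with the Laplace integral suffices.\<close>

lemma power_le_fact_mult_exp:
  fixes y :: real assumes "0 \<le> y" shows "y ^ k \<le> fact k * exp y"
proof -
  obtain t where t: "exp y = (\<Sum>m<Suc k. y ^ m / fact m) + exp t / fact (Suc k) * y ^ Suc k"
    using Maclaurin_exp_le[of y "Suc k"] by blast
  have "y ^ k / fact k \<le> (\<Sum>m<Suc k. y ^ m / fact m)"
    by (rule member_le_sum[where f="\<lambda>m. y ^ m / fact m" and i=k]) (use assms in auto)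
  also have "\<dots> \<le> exp y" unfolding t using assms by (intro add_increasing2) auto
  finally show ?thesis by (simp add: divide_simps mult.commute)
qed

lemma power_mult_exp_neg_le:
  fixes x \<epsilon> :: real assumes "0 \<le> x" "0 < \<epsilon>"
  shows "x ^ k * exp (- \<epsilon> * x) \<le> fact k / \<epsilon> ^ k"
proof -
  have "(\<epsilon> * x) ^ k \<le> fact k * exp (\<epsilon> * x)" using power_le_fact_mult_exp assms by simp
  hence "\<epsilon> ^ k * x ^ k * exp (- \<epsilon> * x) \<le> fact k * exp (\<epsilon> * x) * exp (- \<epsilon> * x)"
    by (simp add: power_mult_distrib mult_right_mono)
  also have "\<dots> = fact k" by (simp add: exp_minus field_simps)
  finally show ?thesis using assms by (simp add: field_simps)
qed

lemma exp_minus_linear_remainder_bound: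
  fixes y :: real shows "\<bar>exp (- y) - 1 + y\<bar> \<le> y\<^sup>2 / 2 * exp \<bar>y\<bar>"
proof -
  obtain t where t: "\<bar>t\<bar> \<le> \<bar>-y\<bar>" "exp (-y) = (\<Sum>m<2. (-y) ^ m / fact m) + exp t / fact 2 * (-y)\<^sup>2"
    using Maclaurin_exp_le[of "-y" 2] by blast
  have rem: "exp (- y) - 1 + y = exp t / 2 * y\<^sup>2" using t(2) by (simp add: numeral_2_eq_2)
  have "exp t \<le> exp \<bar>y\<bar>" using t(1) by simp
  from mult_right_mono[OF this, of "y\<^sup>2"] show ?thesis
    unfolding rem by (simp add: abs_mult mult.commute)
qed

lemma exp_minus_quadratic_remainder_bound:
  fixes y :: real assumes "0 \<le> y" shows "\<bar>exp (- y) - 1 + y - y\<^sup>2 / 2\<bar> \<le> y ^ 3 / 6"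
proof (cases "y = 0")
  case False
  then obtain t where t: "t < 0"
    "exp (-y) = (\<Sum>m<3. exp 0 / fact m * (-y) ^ m) + exp t / fact 3 * (-y) ^ 3"
    using Maclaurin_minus[of "-y" 3 "\<lambda>n. exp" exp] assms by auto
  have rem: "exp (- y) - 1 + y - y\<^sup>2 / 2 = - exp t / 6 * y ^ 3"
    using t(2) by (simp add: numeral_3_eq_3 fact_numeral power2_eq_square power3_eq_cube)
  have "exp t \<le> 1" using t(1) by simp
  from mult_right_mono[OF this, of "y ^ 3"] show ?thesis
    unfolding rem using assms by (simp add: abs_mult)
qed simp

lemma minus_ln_one_minus_cubic_remainder_bound:
  fixes u :: real assumes u: "\<bar>u\<bar> \<le> 1/2"
  shows "\<bar>- ln (1 - u) - u - u\<^sup>2 / 2 - u ^ 3 / 3\<bar> \<le> 2 * u ^ 4"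
proof -
  define \<phi> where "\<phi> v = - ln (1 - v) - v - v\<^sup>2 / 2 - v ^ 3 / 3" for v :: real
  have \<phi>': "(\<phi> has_real_derivative v ^ 3 / (1 - v)) (at v)" if "\<bar>v\<bar> \<le> 1/2" for v
  proof -
    have "(\<phi> has_real_derivative (- (-1 / (1 - v)) - 1 - v - v\<^sup>2)) (at v)"
      unfolding \<phi>_def using that
      by (auto intro!: derivative_eq_intros simp: power2_eq_square power3_eq_cube)
    moreover have "- (-1 / (1 - v)) - 1 - v - v\<^sup>2 = v ^ 3 / (1 - v)" using that
      by (simp add: field_simps power2_eq_square power3_eq_cube)
    ultimately show ?thesis by simp
  qed
  have \<phi>'_bound: "\<bar>v ^ 3 / (1 - v)\<bar> \<le> 2 * \<bar>u\<bar> ^ 3" if "\<bar>v\<bar> \<le> \<bar>u\<bar>" for v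
  proof -
    have pos: "1/2 \<le> 1 - v" using that u by simp
    have "\<bar>v\<bar> ^ 3 \<le> \<bar>u\<bar> ^ 3" using that by (simp add: power_mono)
    also have "\<dots> \<le> 2 * \<bar>u\<bar> ^ 3 * (1 - v)"
      using mult_left_mono[of 1 "2 * (1 - v)" "\<bar>u\<bar> ^ 3"] pos by (simp add: algebra_simps)
    finally have "\<bar>v\<bar> ^ 3 / (1 - v) \<le> 2 * \<bar>u\<bar> ^ 3"
      using pos by (subst pos_divide_le_eq) simp_all
    moreover have "\<bar>v ^ 3 / (1 - v)\<bar> = \<bar>v\<bar> ^ 3 / (1 - v)" using pos by (simp add: abs_div power_abs)
    ultimately show ?thesis by simp
  qed
  obtain z where z: "\<bar>z\<bar> \<le> \<bar>u\<bar>" "\<phi> u - \<phi> 0 = u * (z ^ 3 / (1 - z))"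
  proof -
    consider "u = 0" | "0 < u" | "u < 0" by linarith
    then show thesis
    proof cases
      case 1
      then show thesis using that[of 0] by simp
    next
      case 2
      then obtain z where "0 < z" "z < u" "\<phi> u - \<phi> 0 = (u - 0) * (z ^ 3 / (1 - z))"
        using MVT2[of 0 u \<phi> "\<lambda>v. v ^ 3 / (1 - v)"] \<phi>' u by force
      then show thesis using that[of z] by simp
    next
      case 3
      then obtain z where "u < z" "z < 0" "\<phi> 0 - \<phi> u = (0 - u) * (z ^ 3 / (1 - z))"
        using MVT2[of u 0 \<phi> "\<lambda>v. v ^ 3 / (1 - v)"] \<phi>' u by force
      then show thesis using that[of z] by (simp add: algebra_simps)
    qed
  qed
  have "\<bar>\<phi> u\<bar> = \<bar>u\<bar> * \<bar>z ^ 3 / (1 - z)\<bar>" using z(2) by (simp add: \<phi>_def abs_mult)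
  also have "\<dots> \<le> \<bar>u\<bar> * (2 * \<bar>u\<bar> ^ 3)" by (intro mult_left_mono \<phi>'_bound z(1)) simp
  also have "\<dots> = 2 * u ^ 4" by (simp add: power_abs[symmetric] power_even_abs eval_nat_numeral)
  finally show ?thesis by (simp add: \<phi>_def)
qed

section \<open>Euler--Maclaurin summation\<close>

text \<open>The Peano kernel of the trapezoidal rule with endpoint-derivative correction: integrating
  it by parts four times against \<open>u 4\<close> produces the Euler--Maclaurin boundary terms.\<close>

definition em_kernel :: "real \<Rightarrow> real \<Rightarrow> real" where
  "em_kernel h t = t\<^sup>2 * (h - t)\<^sup>2 / 24"

lemma em_kernel_bounds:
  assumes "0 \<le> t" "t \<le> h" shows "0 \<le> em_kernel h t" "em_kernel h t \<le> h ^ 4 / 384"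
proof -
  have kernel: "em_kernel h t = (t * (h - t))\<^sup>2 / 24" by (simp add: em_kernel_def power_mult_distrib)
  show "0 \<le> em_kernel h t" unfolding kernel by simp
  have "t * (h - t) \<le> h\<^sup>2 / 4"
    using zero_le_power2[of "t - h/2"] by (simp add: power2_eq_square algebra_simps)
  then have "(t * (h - t))\<^sup>2 \<le> (h\<^sup>2 / 4)\<^sup>2" using assms by (intro power_mono) auto
  then show "em_kernel h t \<le> h ^ 4 / 384"
    unfolding kernel by (simp add: power_divide power_mult[symmetric])
qed

definition em_primitive :: "real \<Rightarrow> real \<Rightarrow> (nat \<Rightarrow> real \<Rightarrow> real) \<Rightarrow> real \<Rightarrow> real" where
  "em_primitive h c u x = em_kernel h (x - c) * u 3 x
     - (2*h\<^sup>2*(x - c) - 6*h*(x - c)\<^sup>2 + 4*(x - c)^3) / 24 * u 2 x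
     + (2*h\<^sup>2 - 12*h*(x - c) + 12*(x - c)\<^sup>2) / 24 * u 1 x - (x - c - h/2) * u 0 x"

lemma has_real_derivative_em_primitive:
  fixes u :: "nat \<Rightarrow> real \<Rightarrow> real"
  assumes der: "\<And>k. k < 4 \<Longrightarrow> (u k has_real_derivative u (Suc k) x) (at x within S)"
  shows "(em_primitive h c u has_real_derivative em_kernel h (x - c) * u 4 x - u 0 x) (at x within S)"
proof -
  define K1 where "K1 t = (2*h\<^sup>2*t - 6*h*t\<^sup>2 + 4*t^3) / 24" for t
  define K2 where "K2 t = (2*h\<^sup>2 - 12*h*t + 12*t\<^sup>2) / 24" for t
  define K3 where "K3 t = t - h/2" for t
  have D0: "(u 0 has_real_derivative u 1 x) (at x within S)"
    and D1: "(u 1 has_real_derivative u 2 x) (at x within S)"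
    and D2: "(u 2 has_real_derivative u 3 x) (at x within S)"
    and D3: "(u 3 has_real_derivative u 4 x) (at x within S)"
    using der[of 0] der[of 1] der[of 2] der[of 3] by (simp_all add: eval_nat_numeral)
  have P0: "((\<lambda>x. em_kernel h (x - c)) has_real_derivative K1 (x - c)) (at x within S)"
    and P1: "((\<lambda>x. K1 (x - c)) has_real_derivative K2 (x - c)) (at x within S)"
    and P2: "((\<lambda>x. K2 (x - c)) has_real_derivative K3 (x - c)) (at x within S)"
    and P3: "((\<lambda>x. K3 (x - c)) has_real_derivative 1) (at x within S)"
    unfolding em_kernel_def K1_def K2_def K3_def
    by (auto intro!: derivative_eq_intros simp: field_simps power2_eq_square power3_eq_cube)
  have "em_primitive h c u = (\<lambda>x. em_kernel h (x - c) * u 3 x - K1 (x - c) * u 2 x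
      + K2 (x - c) * u 1 x - K3 (x - c) * u 0 x)"
    by (simp add: em_primitive_def K1_def K2_def K3_def fun_eq_iff)
  moreover have "((\<lambda>x. em_kernel h (x - c) * u 3 x - K1 (x - c) * u 2 x
      + K2 (x - c) * u 1 x - K3 (x - c) * u 0 x) has_real_derivative
      (K1 (x - c) * u 3 x + u 4 x * em_kernel h (x - c)) - (K2 (x - c) * u 2 x + u 3 x * K1 (x - c))
      + (K3 (x - c) * u 1 x + u 2 x * K2 (x - c)) - (1 * u 0 x + u 1 x * K3 (x - c))) (at x within S)"
    by (intro DERIV_diff DERIV_add DERIV_mult P0 P1 P2 P3 D0 D1 D2 D3)
  ultimately show ?thesis by (simp add: algebra_simps)
qed

lemma euler_maclaurin_cell:
  fixes u :: "nat \<Rightarrow> real \<Rightarrow> real"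
  assumes h: "0 < h"
    and der: "\<And>k x. k < 4 \<Longrightarrow> x \<in> {c..c+h} \<Longrightarrow>
                (u k has_real_derivative u (Suc k) x) (at x within {c..c+h})"
  shows "(\<lambda>x. em_kernel h (x - c) * u 4 x) integrable_on {c..c+h}"
    "integral {c..c+h} (u 0) = h/2 * (u 0 c + u 0 (c+h)) - h\<^sup>2/12 * (u 1 (c+h) - u 1 c)
        + integral {c..c+h} (\<lambda>x. em_kernel h (x - c) * u 4 x)"
proof -
  have "(em_primitive h c u has_real_derivative em_kernel h (x - c) * u 4 x - u 0 x)
      (at x within {c..c+h})" if "x \<in> {c..c+h}" for x
    using that by (intro has_real_derivative_em_primitive der) auto
  then have "((\<lambda>x. em_kernel h (x - c) * u 4 x - u 0 x) has_integral
      (em_primitive h c u (c+h) - em_primitive h c u c)) {c..c+h}"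
    using h by (intro fundamental_theorem_of_calculus)
      (auto simp: has_real_derivative_iff_has_vector_derivative)
  moreover have "continuous_on {c..c+h} (u 0)" using der[of 0] by (intro DERIV_continuous_on) auto
  then have "(u 0 has_integral integral {c..c+h} (u 0)) {c..c+h}"
    by (intro integrable_integral integrable_continuous_interval)
  ultimately have "((\<lambda>x. (em_kernel h (x - c) * u 4 x - u 0 x) + u 0 x) has_integral
      (em_primitive h c u (c+h) - em_primitive h c u c) + integral {c..c+h} (u 0)) {c..c+h}"
    by (rule has_integral_add)
  then have kernel_int: "((\<lambda>x. em_kernel h (x - c) * u 4 x) has_integral
      (em_primitive h c u (c+h) - em_primitive h c u c) + integral {c..c+h} (u 0)) {c..c+h}"
    by simp
  then show "(\<lambda>x. em_kernel h (x - c) * u 4 x) integrable_on {c..c+h}"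
    by (rule has_integral_integrable)
  have "em_primitive h c u (c+h) - em_primitive h c u c
      = h\<^sup>2/12 * (u 1 (c+h) - u 1 c) - h/2 * (u 0 (c+h) + u 0 c)"
    unfolding em_primitive_def em_kernel_def by (simp add: field_simps power2_eq_square power3_eq_cube)
  with integral_unique[OF kernel_int]
  show "integral {c..c+h} (u 0) = h/2 * (u 0 c + u 0 (c+h)) - h\<^sup>2/12 * (u 1 (c+h) - u 1 c)
        + integral {c..c+h} (\<lambda>x. em_kernel h (x - c) * u 4 x)"
    by simp
qed

lemma euler_maclaurin_cell_remainder_le:
  fixes u :: "nat \<Rightarrow> real \<Rightarrow> real"
  assumes h: "0 < h"
    and der: "\<And>k x. k < 4 \<Longrightarrow> x \<in> {c..c+h} \<Longrightarrow>
                (u k has_real_derivative u (Suc k) x) (at x within {c..c+h})"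
    and P: "P integrable_on {c..c+h}" and u4_le: "\<And>x. x \<in> {c..c+h} \<Longrightarrow> \<bar>u 4 x\<bar> \<le> P x"
  shows "\<bar>integral {c..c+h} (\<lambda>x. em_kernel h (x - c) * u 4 x)\<bar> \<le> h ^ 4 / 384 * integral {c..c+h} P"
proof -
  have "norm (integral {c..c+h} (\<lambda>x. em_kernel h (x - c) * u 4 x))
      \<le> integral {c..c+h} (\<lambda>x. h ^ 4 / 384 * P x)"
  proof (rule integral_norm_bound_integral[OF euler_maclaurin_cell(1)[where c=c and u=u, OF h der]])
    show "(\<lambda>x. h ^ 4 / 384 * P x) integrable_on {c..c+h}"
      using P by (rule integrable_on_mult_right)
    fix x assume x: "x \<in> {c..c+h}"
    then have "em_kernel h (x - c) * \<bar>u 4 x\<bar> \<le> h ^ 4 / 384 * P x"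
      using em_kernel_bounds[of "x - c" h] u4_le[OF x] by (intro mult_mono) auto
    then show "norm (em_kernel h (x - c) * u 4 x) \<le> h ^ 4 / 384 * P x"
      using em_kernel_bounds[of "x - c" h] x by (simp add: abs_mult)
  qed
  then show ?thesis by simp
qed

lemma integral_sum_cells:
  fixes \<phi> :: "real \<Rightarrow> real"
  assumes h: "0 \<le> h" and int: "\<phi> integrable_on {0..real N * h}"
  shows "integral {0..real N * h} \<phi> = (\<Sum>n<N. integral {real n * h..real n * h + h} \<phi>)"
  using int
proof (induction N)
  case (Suc N)
  have split: "real (Suc N) * h = real N * h + h" by (simp add: algebra_simps)
  have "\<phi> integrable_on {0..real N * h}"
    by (rule integrable_on_subinterval[OF Suc.prems[unfolded split]]) (use h in auto)
  then have "integral {0..real N * h} \<phi> = (\<Sum>n<N. integral {real n * h..real n * h + h} \<phi>)"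
    by (rule Suc.IH)
  moreover have "integral {0..real N * h} \<phi> + integral {real N * h..real N * h + h} \<phi>
      = integral {0..real N * h + h} \<phi>"
    using h Suc.prems[unfolded split] by (intro Henstock_Kurzweil_Integration.integral_combine) auto
  ultimately show ?case unfolding split by simp
qed simp

lemma euler_maclaurin_partial_sum:
  fixes u :: "nat \<Rightarrow> real \<Rightarrow> real" and P :: "real \<Rightarrow> real"
  assumes h: "0 < h"
    and der: "\<And>k x. k < 4 \<Longrightarrow> 0 \<le> x \<Longrightarrow> (u k has_real_derivative u (Suc k) x) (at x within {0..})"
    and P: "\<And>T. P integrable_on {0..T}"
    and u4_le: "\<And>x. 0 \<le> x \<Longrightarrow> \<bar>u 4 x\<bar> \<le> P x"
  shows "\<bar>h * (\<Sum>n<N. u 0 (real n * h + h))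
           - (integral {0..real N * h} (u 0) - h/2 * u 0 0 + h/2 * u 0 (real N * h)
              + h\<^sup>2/12 * (u 1 (real N * h) - u 1 0))\<bar>
         \<le> h ^ 4 / 384 * integral {0..real N * h} P"
proof -
  define x where "x n = real n * h" for n
  have x_Suc: "x (Suc n) = x n + h" for n by (simp add: x_def algebra_simps)
  have x_nonneg: "0 \<le> x n" for n using h by (simp add: x_def)
  define K where "K n = integral {x n..x n + h} (\<lambda>y. em_kernel h (y - x n) * u 4 y)" for n
  have der_cell: "(u k has_real_derivative u (Suc k) y) (at y within {x n..x n + h})"
    if "k < 4" "y \<in> {x n..x n + h}" for k n y
    using that x_nonneg[of n] by (intro DERIV_subset[OF der]) auto
  have cell: "integral {x n..x n + h} (u 0)
      = h/2 * (u 0 (x n) + u 0 (x (Suc n))) - h\<^sup>2/12 * (u 1 (x (Suc n)) - u 1 (x n)) + K n" for n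
    unfolding K_def x_Suc by (rule euler_maclaurin_cell(2)[where c="x n" and u=u, OF h der_cell])
  have K_le: "\<bar>K n\<bar> \<le> h ^ 4 / 384 * integral {x n..x n + h} P" for n
    unfolding K_def using x_nonneg[of n]
    by (intro euler_maclaurin_cell_remainder_le[where c="x n" and u=u, OF h der_cell]
        integrable_on_subinterval[OF P[of "x n + h"]] u4_le) auto
  have "continuous_on {0..x N} (u 0)"
    by (rule DERIV_continuous_on[where D="u (Suc 0)"], rule DERIV_subset[OF der[of 0]]) auto
  then have "integral {0..x N} (u 0) = (\<Sum>n<N. integral {x n..x n + h} (u 0))"
    unfolding x_def using h by (intro integral_sum_cells integrable_continuous_interval) auto
  also have "\<dots> = (\<Sum>n<N. h/2 * u 0 (x n) + h/2 * u 0 (x (Suc n))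
      - h\<^sup>2/12 * (u 1 (x (Suc n)) - u 1 (x n)) + K n)"
    by (intro sum.cong refl) (subst cell, simp add: algebra_simps)
  also have "\<dots> = h/2 * (\<Sum>n<N. u 0 (x n)) + h/2 * (\<Sum>n<N. u 0 (x (Suc n)))
      - h\<^sup>2/12 * (\<Sum>n<N. u 1 (x (Suc n)) - u 1 (x n)) + (\<Sum>n<N. K n)"
    by (simp only: sum.distrib sum_subtractf sum_distrib_left right_diff_distrib)
  also have "\<dots> = h * (\<Sum>n<N. u 0 (x (Suc n))) + h/2 * u 0 0 - h/2 * u 0 (x N)
      - h\<^sup>2/12 * (u 1 (x N) - u 1 0) + (\<Sum>n<N. K n)"
  proof -
    have x0: "x 0 = 0" by (simp add: x_def)
    have "(\<Sum>n<N. u 0 (x n)) = (\<Sum>n<N. u 0 (x (Suc n))) - (u 0 (x N) - u 0 0)"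
      using sum_lessThan_telescope[of "\<lambda>n. u 0 (x n)" N] by (simp add: x0 sum_subtractf)
    moreover have "(\<Sum>n<N. u 1 (x (Suc n)) - u 1 (x n)) = u 1 (x N) - u 1 0"
      using sum_lessThan_telescope[of "\<lambda>n. u 1 (x n)" N] by (simp add: x0)
    ultimately show ?thesis by (simp only:) (simp add: algebra_simps)
  qed
  finally have identity: "h * (\<Sum>n<N. u 0 (x (Suc n)))
      - (integral {0..x N} (u 0) - h/2 * u 0 0 + h/2 * u 0 (x N) + h\<^sup>2/12 * (u 1 (x N) - u 1 0))
      = - (\<Sum>n<N. K n)"
    by simp
  have "\<bar>\<Sum>n<N. K n\<bar> \<le> (\<Sum>n<N. h ^ 4 / 384 * integral {x n..x n + h} P)"
    using K_le by (intro sum_abs[THEN order_trans] sum_mono)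
  also have "\<dots> = h ^ 4 / 384 * integral {0..x N} P"
    unfolding x_def using h P by (simp add: integral_sum_cells sum_distrib_left)
  finally show ?thesis using identity[unfolded x_Suc] by (simp add: x_def)
qed

lemma tendsto_integral_atLeastAtMost_at_top:
  fixes \<phi> :: "real \<Rightarrow> real"
  assumes "\<phi> absolutely_integrable_on {0..}"
  shows "((\<lambda>T. integral {0..T} \<phi>) \<longlongrightarrow> integral {0..} \<phi>) at_top"
proof -
  have "((\<lambda>T. set_lebesgue_integral lebesgue {0..T} \<phi>) \<longlongrightarrow> set_lebesgue_integral lebesgue {0..} \<phi>) at_top"
    using assms by (intro tendsto_set_lebesgue_integral_at_top) auto
  moreover have "set_lebesgue_integral lebesgue {0..} \<phi> = integral {0..} \<phi>"
    using assms by (rule set_lebesgue_integral_eq_integral(2))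
  moreover have "\<forall>\<^sub>F T in at_top. set_lebesgue_integral lebesgue {0..T} \<phi> = integral {0..T} \<phi>"
    using absolutely_integrable_on_subinterval[OF assms]
    by (intro eventually_at_top_linorderI[of 0] set_lebesgue_integral_eq_integral(2)) auto
  ultimately show ?thesis using tendsto_cong by fastforce
qed

lemma filterlim_real_mult_sequentially: "0 < h \<Longrightarrow> filterlim (\<lambda>N. real N * h) at_top sequentially"
  by (rule filterlim_at_top_mult_tendsto_pos[OF tendsto_const _ filterlim_real_sequentially])

lemma euler_maclaurin_series:
  fixes u :: "nat \<Rightarrow> real \<Rightarrow> real" and P :: "real \<Rightarrow> real"
  assumes h: "0 < h"
    and der: "\<And>k x. k < 4 \<Longrightarrow> 0 \<le> x \<Longrightarrow> (u k has_real_derivative u (Suc k) x) (at x within {0..})"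
    and P: "P integrable_on {0..}" and u4_le: "\<And>x. 0 \<le> x \<Longrightarrow> \<bar>u 4 x\<bar> \<le> P x"
    and u0: "u 0 absolutely_integrable_on {0..}" "(u 0 \<longlongrightarrow> 0) at_top"
    and u1: "(u 1 \<longlongrightarrow> 0) at_top"
    and sm: "summable (\<lambda>n. u 0 (real n * h + h))"
  shows "\<bar>h * (\<Sum>n. u 0 (real n * h + h)) - (integral {0..} (u 0) - h/2 * u 0 0 - h\<^sup>2/12 * u 1 0)\<bar>
    \<le> h ^ 4 / 384 * integral {0..} P"
proof -
  have P_int: "P integrable_on {0..T}" for T by (rule integrable_on_subinterval[OF P]) auto
  have "\<bar>h * (\<Sum>n<N. u 0 (real n * h + h))
         - (integral {0..real N * h} (u 0) - h/2 * u 0 0 + h/2 * u 0 (real N * h)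
            + h\<^sup>2/12 * (u 1 (real N * h) - u 1 0))\<bar> \<le> h ^ 4 / 384 * integral {0..} P" for N
  proof -
    have "\<bar>h * (\<Sum>n<N. u 0 (real n * h + h))
         - (integral {0..real N * h} (u 0) - h/2 * u 0 0 + h/2 * u 0 (real N * h)
            + h\<^sup>2/12 * (u 1 (real N * h) - u 1 0))\<bar> \<le> h ^ 4 / 384 * integral {0..real N * h} P"
      by (rule euler_maclaurin_partial_sum[OF h der P_int u4_le])
    also have "\<dots> \<le> h ^ 4 / 384 * integral {0..} P"
      using P P_int u4_le by (intro mult_left_mono integral_subset_le) (auto intro: order_trans[OF abs_ge_zero])
    finally show ?thesis .
  qed
  moreover have "(\<lambda>N. \<bar>h * (\<Sum>n<N. u 0 (real n * h + h))
         - (integral {0..real N * h} (u 0) - h/2 * u 0 0 + h/2 * u 0 (real N * h)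
            + h\<^sup>2/12 * (u 1 (real N * h) - u 1 0))\<bar>)
      \<longlonglongrightarrow> \<bar>h * (\<Sum>n. u 0 (real n * h + h))
         - (integral {0..} (u 0) - h/2 * u 0 0 + h/2 * 0 + h\<^sup>2/12 * (0 - u 1 0))\<bar>"
  proof -
    have seq: "filterlim (\<lambda>N. real N * h) at_top sequentially"
      using h by (rule filterlim_real_mult_sequentially)
    show ?thesis
      by (intro tendsto_rabs tendsto_diff tendsto_add tendsto_mult_left tendsto_const
          summable_LIMSEQ[OF sm] filterlim_compose[OF tendsto_integral_atLeastAtMost_at_top[OF u0(1)] seq]
          filterlim_compose[OF u0(2) seq] filterlim_compose[OF u1 seq])
  qed
  ultimately have "\<bar>h * (\<Sum>n. u 0 (real n * h + h))
      - (integral {0..} (u 0) - h/2 * u 0 0 + h/2 * 0 + h\<^sup>2/12 * (0 - u 1 0))\<bar> \<le> h ^ 4 / 384 * integral {0..} P"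
    by (intro LIMSEQ_le_const2) auto
  then show ?thesis by simp
qed

section \<open>Derivatives of exponentially damped functions\<close>

text \<open>If \<open>u (Suc i)\<close> is the derivative of \<open>u i\<close>, then by the Leibniz rule \<open>exp_damped \<beta> u k\<close>
  is the \<open>k\<close>-th derivative of \<open>\<lambda>x. exp (- \<beta> * x) * u 0 x\<close>.\<close>

definition exp_damped :: "real \<Rightarrow> (nat \<Rightarrow> real \<Rightarrow> real) \<Rightarrow> nat \<Rightarrow> real \<Rightarrow> real" where
  "exp_damped \<beta> u k x = exp (- \<beta> * x) * (\<Sum>i\<le>k. of_nat (k choose i) * (- \<beta>) ^ (k - i) * u i x)"

lemma binomial_sum_derivative_step:
  fixes u :: "nat \<Rightarrow> real \<Rightarrow> real"
  shows "(\<Sum>i\<le>k. of_nat (k choose i) * (-\<beta>) ^ (k - i) * u (Suc i) x)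
          - \<beta> * (\<Sum>i\<le>k. of_nat (k choose i) * (-\<beta>) ^ (k - i) * u i x)
       = (\<Sum>i\<le>Suc k. of_nat (Suc k choose i) * (-\<beta>) ^ (Suc k - i) * u i x)"
proof -
  have "(\<Sum>i\<le>Suc k. of_nat (Suc k choose i) * (-\<beta>) ^ (Suc k - i) * u i x)
      = (-\<beta>) ^ Suc k * u 0 x + (\<Sum>i\<le>k. of_nat (Suc k choose Suc i) * (-\<beta>) ^ (k - i) * u (Suc i) x)"
    by (subst sum.atMost_Suc_shift) simp
  also have "\<dots> = (-\<beta>) ^ Suc k * u 0 x + (\<Sum>i\<le>k. of_nat (k choose Suc i) * (-\<beta>) ^ (k - i) * u (Suc i) x)
      + (\<Sum>i\<le>k. of_nat (k choose i) * (-\<beta>) ^ (k - i) * u (Suc i) x)"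
    by (simp add: sum.distrib algebra_simps)
  also have "(-\<beta>) ^ Suc k * u 0 x + (\<Sum>i\<le>k. of_nat (k choose Suc i) * (-\<beta>) ^ (k - i) * u (Suc i) x)
      = (\<Sum>i\<le>Suc k. of_nat (k choose i) * (-\<beta>) ^ (Suc k - i) * u i x)"
    using sum.atMost_Suc_shift[of "\<lambda>i. of_nat (k choose i) * (-\<beta>) ^ (Suc k - i) * u i x" k]
    by simp
  also have "\<dots> = - \<beta> * (\<Sum>i\<le>k. of_nat (k choose i) * (-\<beta>) ^ (k - i) * u i x)"
    by (simp add: sum_distrib_left Suc_diff_le algebra_simps)
  finally show ?thesis by simp
qed

lemma has_real_derivative_exp_damped:
  assumes "\<And>i. i \<le> k \<Longrightarrow> (u i has_real_derivative u (Suc i) x) (at x within S)"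
  shows "(exp_damped \<beta> u k has_real_derivative exp_damped \<beta> u (Suc k) x) (at x within S)"
proof -
  define p where "p k x = (\<Sum>i\<le>k. of_nat (k choose i) * (- \<beta>) ^ (k - i) * u i x)" for k x
  have "(p k has_real_derivative (\<Sum>i\<le>k. of_nat (k choose i) * (- \<beta>) ^ (k - i) * u (Suc i) x))
      (at x within S)"
    unfolding p_def by (intro DERIV_sum DERIV_cmult assms) simp
  then have "((\<lambda>x. exp (- \<beta> * x) * p k x) has_real_derivative
      exp (- \<beta> * x) * (- \<beta>) * p k x
      + (\<Sum>i\<le>k. of_nat (k choose i) * (- \<beta>) ^ (k - i) * u (Suc i) x) * exp (- \<beta> * x)) (at x within S)"
    by (intro DERIV_mult) (auto intro!: derivative_eq_intros)
  moreover have "exp (- \<beta> * x) * (- \<beta>) * p k x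
      + (\<Sum>i\<le>k. of_nat (k choose i) * (- \<beta>) ^ (k - i) * u (Suc i) x) * exp (- \<beta> * x)
      = exp (- \<beta> * x) * p (Suc k) x"
    using binomial_sum_derivative_step[of k \<beta> u x] unfolding p_def by (simp add: algebra_simps)
  ultimately show ?thesis unfolding exp_damped_def p_def[symmetric] by simp
qed

lemma exp_damped_0: "exp_damped \<beta> u 0 x = exp (- \<beta> * x) * u 0 x"
  by (simp add: exp_damped_def)

lemma exp_damped_1: "exp_damped \<beta> u 1 x = exp (- \<beta> * x) * u 1 x - \<beta> * (exp (- \<beta> * x) * u 0 x)"
  by (simp add: exp_damped_def algebra_simps)

lemma abs_exp_damped_le:
  assumes "a \<le> \<beta>" "\<bar>\<beta>\<bar> \<le> B" "0 \<le> x"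
  shows "\<bar>exp_damped \<beta> u k x\<bar>
    \<le> (\<Sum>i\<le>k. of_nat (k choose i) * B ^ (k - i) * \<bar>exp (- a * x) * u i x\<bar>)"
proof -
  have "\<bar>\<Sum>i\<le>k. of_nat (k choose i) * (- \<beta>) ^ (k - i) * u i x\<bar>
      \<le> (\<Sum>i\<le>k. of_nat (k choose i) * B ^ (k - i) * \<bar>u i x\<bar>)"
  proof (rule order_trans[OF sum_abs sum_mono])
    fix i
    have "\<bar>\<beta>\<bar> ^ (k - i) \<le> B ^ (k - i)" using assms(2) by (intro power_mono) auto
    then show "\<bar>of_nat (k choose i) * (- \<beta>) ^ (k - i) * u i x\<bar>
        \<le> of_nat (k choose i) * B ^ (k - i) * \<bar>u i x\<bar>"
      by (simp add: abs_mult power_abs mult_left_mono mult_right_mono)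
  qed
  moreover have "exp (- \<beta> * x) \<le> exp (- a * x)" using assms by (simp add: mult_right_mono)
  ultimately have "\<bar>exp_damped \<beta> u k x\<bar>
      \<le> exp (- a * x) * (\<Sum>i\<le>k. of_nat (k choose i) * B ^ (k - i) * \<bar>u i x\<bar>)"
    unfolding exp_damped_def abs_mult by (intro mult_mono) auto
  then show ?thesis by (simp add: sum_distrib_left abs_mult algebra_simps)
qed

section \<open>The second-order expansion\<close>

lemma rate_correction_expansion:
  fixes h \<gamma> :: real
  assumes h: "0 < h" and small: "\<bar>\<gamma> * h\<bar> \<le> 1/2"
  defines "D \<equiv> (- ln (1 - \<gamma> * h) / h - \<gamma>) / h"
  shows "exp (- (\<gamma> + h * D) * h) = 1 - \<gamma> * h" "0 \<le> D"
    "\<bar>D - \<gamma>\<^sup>2/2 - \<gamma>^3*h/3\<bar> \<le> 2 * \<gamma>^4 * h\<^sup>2"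
proof -
  define u where "u = \<gamma> * h"
  have u: "\<bar>u\<bar> \<le> 1/2" using small by (simp add: u_def)
  have D_eq: "D = (- ln (1 - u) - u) / h\<^sup>2"
    unfolding D_def u_def using h by (simp add: field_simps power2_eq_square)
  have "- (\<gamma> + h * D) * h = ln (1 - u)" using h by (simp add: D_def u_def field_simps)
  then show "exp (- (\<gamma> + h * D) * h) = 1 - \<gamma> * h" using u by (simp add: u_def)
  have "ln (1 - u) \<le> - u" using ln_le_minus_one[of "1 - u"] u by simp
  then show "0 \<le> D" unfolding D_eq by simp
  have "\<bar>D - \<gamma>\<^sup>2/2 - \<gamma>^3*h/3\<bar> = \<bar>- ln (1 - u) - u - u\<^sup>2/2 - u^3/3\<bar> / h\<^sup>2"
    unfolding D_eq u_def using h by (simp add: field_simps abs_div power2_eq_square power3_eq_cube)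
  also have "\<dots> \<le> 2 * u ^ 4 / h\<^sup>2"
    using minus_ln_one_minus_cubic_remainder_bound[OF u] by (simp add: divide_right_mono)
  also have "\<dots> = 2 * \<gamma> ^ 4 * h\<^sup>2"
    using h by (simp add: u_def field_simps eval_nat_numeral)
  finally show "\<bar>D - \<gamma>\<^sup>2/2 - \<gamma>^3*h/3\<bar> \<le> 2 * \<gamma>^4 * h\<^sup>2" .
qed

lemma rate_correction_bounds:
  fixes h \<gamma> \<Gamma> :: real
  assumes h: "0 < h" and \<gamma>: "\<bar>\<gamma>\<bar> \<le> \<Gamma>" and \<Gamma>: "1 \<le> \<Gamma>" and small: "\<Gamma> * h \<le> 1/2"
  defines "D \<equiv> (- ln (1 - \<gamma> * h) / h - \<gamma>) / h"
  shows "exp (- (\<gamma> + h * D) * h) = 1 - \<gamma> * h" "0 \<le> D" "h * D \<le> \<Gamma>" "D \<le> 2 * \<Gamma>\<^sup>2"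
    "\<bar>D - \<gamma>\<^sup>2/2 - \<gamma>^3*h/3\<bar> \<le> 2 * \<Gamma>^4 * h\<^sup>2" "\<bar>D\<^sup>2 - \<gamma>^4/4\<bar> \<le> 6 * \<Gamma>^5 * h"
proof -
  have "\<bar>\<gamma>\<bar> * h \<le> \<Gamma> * h" using \<gamma> h by (simp add: mult_right_mono)
  moreover have "\<bar>\<gamma> * h\<bar> = \<bar>\<gamma>\<bar> * h" using h by (simp add: abs_mult)
  ultimately have "\<bar>\<gamma> * h\<bar> \<le> 1/2" using small by linarith
  note expansion = rate_correction_expansion[OF h this, folded D_def]
  show "exp (- (\<gamma> + h * D) * h) = 1 - \<gamma> * h" by (fact expansion(1))
  show "0 \<le> D" by (fact expansion(2))
  have pow_le: "\<bar>\<gamma>\<bar> ^ n \<le> \<Gamma> ^ n" for n using \<gamma> by (intro power_mono) auto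
  have "2 * \<gamma> ^ 4 * h\<^sup>2 \<le> 2 * \<Gamma> ^ 4 * h\<^sup>2"
    using pow_le[of 4] by (simp add: power_even_abs mult_right_mono)
  with expansion(3) show third: "\<bar>D - \<gamma>\<^sup>2/2 - \<gamma>^3*h/3\<bar> \<le> 2 * \<Gamma>^4 * h\<^sup>2" by linarith
  have "\<bar>\<gamma>^3*h/3\<bar> \<le> \<Gamma>^3*h/3" using pow_le[of 3] h by (simp add: abs_mult power_abs)
  moreover have "\<Gamma>^4 * h\<^sup>2 \<le> \<Gamma>^3 * h * (1/2)" and "\<Gamma>^3 * h \<le> \<Gamma>\<^sup>2 * (1/2)"
    using mult_left_mono[OF small, of "\<Gamma>^3 * h"] mult_left_mono[OF small, of "\<Gamma>\<^sup>2"] h \<Gamma>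
    by (simp_all add: eval_nat_numeral algebra_simps)
  ultimately have second: "\<bar>D - \<gamma>\<^sup>2/2\<bar> \<le> 2 * \<Gamma>^3 * h" using third by linarith
  have "\<gamma>\<^sup>2 \<le> \<Gamma>\<^sup>2" using pow_le[of 2] by simp
  with second \<open>\<Gamma>^3 * h \<le> \<Gamma>\<^sup>2 * (1/2)\<close> show D_le: "D \<le> 2 * \<Gamma>\<^sup>2" by linarith
  have "h * D \<le> 2 * \<Gamma> * (\<Gamma> * h)"
    using mult_left_mono[OF D_le, of h] h by (simp add: power2_eq_square algebra_simps)
  also have "\<dots> \<le> \<Gamma>" using mult_left_mono[OF small, of "2 * \<Gamma>"] \<Gamma> by simp
  finally show "h * D \<le> \<Gamma>" .
  from D_le \<open>\<gamma>\<^sup>2 \<le> \<Gamma>\<^sup>2\<close> expansion(2) have sum: "0 \<le> D + \<gamma>\<^sup>2/2" "D + \<gamma>\<^sup>2/2 \<le> 3 * \<Gamma>\<^sup>2"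
    by auto
  have "D\<^sup>2 - \<gamma>^4/4 = (D - \<gamma>\<^sup>2/2) * (D + \<gamma>\<^sup>2/2)"
    by (simp add: power2_eq_square eval_nat_numeral algebra_simps)
  then have "\<bar>D\<^sup>2 - \<gamma>^4/4\<bar> = \<bar>D - \<gamma>\<^sup>2/2\<bar> * (D + \<gamma>\<^sup>2/2)"
    using sum(1) by (simp add: abs_mult)
  also have "\<dots> \<le> (2 * \<Gamma>^3 * h) * (3 * \<Gamma>\<^sup>2)"
    using second sum h \<Gamma> by (intro mult_mono) auto
  also have "\<dots> = 6 * \<Gamma>^5 * h" by (simp add: eval_nat_numeral algebra_simps)
  finally show "\<bar>D\<^sup>2 - \<gamma>^4/4\<bar> \<le> 6 * \<Gamma>^5 * h" .
qed

text \<open>In the next two lemmas \<open>F\<close> stands for the lattice sum, \<open>L\<^sub>\<beta>\<close> for the Laplace transform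
  at the rate \<open>\<beta>\<close> and \<open>m\<^sub>k\<close> for the moments at \<open>\<gamma>\<close>; the left-hand side of the identity is
  the error of the second-order expansion.\<close>

lemma second_order_remainder_identity:
  fixes h F L\<^sub>\<beta> fp \<beta> \<gamma> D E R m\<^sub>0 m\<^sub>1 m\<^sub>2 :: real
  assumes h: "h \<noteq> 0"
    and em: "h * F = L\<^sub>\<beta> - h/2 - h\<^sup>2/12 * (fp - \<beta>) - E"
    and taylor: "L\<^sub>\<beta> = m\<^sub>0 - (h*D) * m\<^sub>1 + (h*D)\<^sup>2/2 * m\<^sub>2 + R"
    and \<beta>: "\<beta> = \<gamma> + h * D"
  shows "F - (m\<^sub>0/h + (1/2 * \<gamma>\<^sup>2 * (- m\<^sub>1) - 1/2))
           - h * (1/3 * \<gamma>^3 * (- m\<^sub>1) + 1/8 * \<gamma>^4 * m\<^sub>2 + 1/12 * (\<gamma> - fp))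
       = - m\<^sub>1 * (D - \<gamma>\<^sup>2/2 - \<gamma>^3*h/3) + h/2 * m\<^sub>2 * (D\<^sup>2 - \<gamma>^4/4) + R/h + h\<^sup>2*D/12 - E/h"
proof -
  have F: "F = (m\<^sub>0 - (h*D) * m\<^sub>1 + (h*D)\<^sup>2/2 * m\<^sub>2 + R - h/2 - h\<^sup>2/12 * (fp - (\<gamma> + h * D)) - E) / h"
    using em h unfolding taylor \<beta> by (simp add: field_simps)
  show ?thesis unfolding F using h by (simp add: field_simps power2_eq_square power3_eq_cube eval_nat_numeral)
qed

lemma second_order_remainder_bound:
  fixes h \<gamma> \<Gamma> D m\<^sub>1 m\<^sub>2 m\<^sub>3 M\<^sub>1 M\<^sub>2 M\<^sub>3 R E P :: real
  assumes h: "0 < h" "h \<le> 1" and \<Gamma>: "0 \<le> \<Gamma>"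
    and m\<^sub>1: "0 \<le> m\<^sub>1" "m\<^sub>1 \<le> M\<^sub>1" and m\<^sub>2: "0 \<le> m\<^sub>2" "m\<^sub>2 \<le> M\<^sub>2" and m\<^sub>3: "0 \<le> m\<^sub>3" "m\<^sub>3 \<le> M\<^sub>3"
    and D: "0 \<le> D" "D \<le> 2 * \<Gamma>\<^sup>2" "\<bar>D - \<gamma>\<^sup>2/2 - \<gamma>^3*h/3\<bar> \<le> 2 * \<Gamma>^4 * h\<^sup>2"
      "\<bar>D\<^sup>2 - \<gamma>^4/4\<bar> \<le> 6 * \<Gamma>^5 * h"
    and R: "\<bar>R\<bar> \<le> (h*D)^3/6 * m\<^sub>3" and E: "\<bar>E\<bar> \<le> h^4/384 * P" and P: "0 \<le> P"
  shows "\<bar>- m\<^sub>1 * (D - \<gamma>\<^sup>2/2 - \<gamma>^3*h/3) + h/2 * m\<^sub>2 * (D\<^sup>2 - \<gamma>^4/4) + R/h + h\<^sup>2*D/12 - E/h\<bar>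
    \<le> (2 * \<Gamma>^4 * M\<^sub>1 + 3 * \<Gamma>^5 * M\<^sub>2 + 4/3 * \<Gamma>^6 * M\<^sub>3 + \<Gamma>\<^sup>2/6 + P) * h\<^sup>2"
proof -
  have triangle: "\<bar>a + b + c + d - e\<bar> \<le> \<bar>a\<bar> + \<bar>b\<bar> + \<bar>c\<bar> + \<bar>d\<bar> + \<bar>e\<bar>" for a b c d e :: real
    by linarith
  have b1: "\<bar>- m\<^sub>1 * (D - \<gamma>\<^sup>2/2 - \<gamma>^3*h/3)\<bar> \<le> M\<^sub>1 * (2 * \<Gamma>^4 * h\<^sup>2)"
    unfolding abs_mult abs_minus_cancel using m\<^sub>1 D(3) by (intro mult_mono) auto
  have b2: "\<bar>h/2 * m\<^sub>2 * (D\<^sup>2 - \<gamma>^4/4)\<bar> \<le> h/2 * M\<^sub>2 * (6 * \<Gamma>^5 * h)"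
    unfolding abs_mult using h m\<^sub>2 D(4) by (intro mult_mono) auto
  have b3: "\<bar>R/h\<bar> \<le> h\<^sup>2 * ((2 * \<Gamma>\<^sup>2)^3 * M\<^sub>3) / 6"
  proof -
    have "D^3 * m\<^sub>3 \<le> (2 * \<Gamma>\<^sup>2)^3 * M\<^sub>3"
      using D(1,2) m\<^sub>3 by (intro mult_mono power_mono) auto
    then have "(h*D)^3/6 * m\<^sub>3 / h \<le> h\<^sup>2 * ((2 * \<Gamma>\<^sup>2)^3 * M\<^sub>3) / 6"
      using h by (simp add: eval_nat_numeral field_simps mult_left_mono)
    moreover have "\<bar>R/h\<bar> \<le> (h*D)^3/6 * m\<^sub>3 / h"
      unfolding abs_div using h divide_right_mono[OF R, of h] by simp
    ultimately show ?thesis by linarith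
  qed
  have b4: "\<bar>h\<^sup>2*D/12\<bar> \<le> h\<^sup>2 * (2 * \<Gamma>\<^sup>2) / 12"
    using mult_left_mono[OF D(2), of "h\<^sup>2"] D(1) by (simp add: algebra_simps)
  have b5: "\<bar>E/h\<bar> \<le> h\<^sup>2 * P"
  proof -
    have "\<bar>E/h\<bar> \<le> h^4/384 * P / h"
      unfolding abs_div using h divide_right_mono[OF E, of h] by simp
    also have "\<dots> = h\<^sup>2 * (h/384 * P)" using h by (simp add: field_simps eval_nat_numeral)
    also have "\<dots> \<le> h\<^sup>2 * P" using h P by (intro mult_left_mono mult_left_le_one_le) auto
    finally show ?thesis .
  qed
  have "\<bar>- m\<^sub>1 * (D - \<gamma>\<^sup>2/2 - \<gamma>^3*h/3) + h/2 * m\<^sub>2 * (D\<^sup>2 - \<gamma>^4/4) + R/h + h\<^sup>2*D/12 - E/h\<bar>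
      \<le> M\<^sub>1 * (2 * \<Gamma>^4 * h\<^sup>2) + h/2 * M\<^sub>2 * (6 * \<Gamma>^5 * h) + h\<^sup>2 * ((2 * \<Gamma>\<^sup>2)^3 * M\<^sub>3) / 6
        + h\<^sup>2 * (2 * \<Gamma>\<^sup>2) / 12 + h\<^sup>2 * P"
    by (rule order_trans[OF triangle add_mono[OF add_mono[OF add_mono[OF add_mono[OF b1 b2] b3] b4] b5]])
  also have "\<dots> = (2 * \<Gamma>^4 * M\<^sub>1 + 3 * \<Gamma>^5 * M\<^sub>2 + 4/3 * \<Gamma>^6 * M\<^sub>3 + \<Gamma>\<^sup>2/6 + P) * h\<^sup>2"
    by (simp add: power_mult[symmetric] power2_eq_square field_simps)
  finally show ?thesis .
qed

section \<open>Laplace moments and lattice sums of an admissible profile\<close>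

locale laplace_profile =
  fixes f :: "real \<Rightarrow> real" and fd :: "nat \<Rightarrow> real \<Rightarrow> real"
  assumes nonneg: "\<And>x. x \<ge> 0 \<Longrightarrow> f x \<ge> 0"
    and noninc: "\<And>x y. 0 \<le> x \<Longrightarrow> x \<le> y \<Longrightarrow> f y \<le> f x"
    and f0: "f 0 = 1"
    and fd0: "fd 0 = f"
    and fd_deriv: "\<And>j x. j < 4 \<Longrightarrow> x \<ge> 0 \<Longrightarrow>
                     (fd j has_real_derivative fd (Suc j) x) (at x within {0..})"
    and integrable: "\<And>\<gamma> j. ereal \<gamma> > gamma_min f \<Longrightarrow> j \<le> 4 \<Longrightarrow>
                     set_integrable lborel {0..} (\<lambda>x. exp (- \<gamma> * x) * fd j x)"
    and vanish: "\<And>\<gamma> j. ereal \<gamma> > gamma_min f \<Longrightarrow> j \<le> 4 \<Longrightarrow>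
                     ((\<lambda>x. exp (- \<gamma> * x) * fd j x) \<longlongrightarrow> 0) at_top"
begin

definition region :: "real set" where
  "region = {c. ereal c > gamma_min f}"

lemma region_mono: "c \<in> region \<Longrightarrow> c \<le> d \<Longrightarrow> d \<in> region"
  unfolding region_def by (auto intro: order_less_le_trans)

lemma region_open_below:
  assumes "c \<in> region" obtains c' where "c' \<in> region" "c' < c"
proof -
  from assms have "gamma_min f < ereal c" by (simp add: region_def)
  then obtain z where "gamma_min f < ereal z" "ereal z < ereal c" using ereal_dense2 by blast
  then show ?thesis using that by (simp add: region_def)
qed

lemma absolutely_integrable_exp_fd:
  assumes "c \<in> region" "j \<le> 4"
  shows "(\<lambda>x. exp (- c * x) * fd j x) absolutely_integrable_on {0..}"
proof -
  have int: "set_integrable lborel {0..} (\<lambda>x. exp (- c * x) * fd j x)"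
    using integrable assms by (simp add: region_def)
  show ?thesis unfolding absolutely_integrable_on_def
    using set_borel_integral_eq_integral(1)[OF int]
      set_borel_integral_eq_integral(1)[OF set_integrable_norm[OF int]]
    by simp
qed

lemma absolutely_integrable_power_exp_f:
  assumes "c \<in> region"
  shows "(\<lambda>x. x ^ k * exp (- c * x) * f x) absolutely_integrable_on {0..}"
proof -
  obtain c' where c': "c' \<in> region" "c' < c" using region_open_below assms by blast
  have meas: "(\<lambda>x. x ^ k * exp (- (c - c') * x)) \<in> borel_measurable (lebesgue_on {0..})"
    by (intro continuous_imp_measurable_on_sets_lebesgue continuous_intros) auto
  have bdd: "bounded ((\<lambda>x. x ^ k * exp (- (c - c') * x)) ` {0..})"
    unfolding bounded_real using power_mult_exp_neg_le[of _ "c - c'" k] c' by auto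
  have prod: "(\<lambda>x. x ^ k * exp (- (c - c') * x) * (exp (- c' * x) * fd 0 x))
      absolutely_integrable_on {0..}"
    by (rule absolutely_integrable_bounded_measurable_product_real[OF meas _ bdd
          absolutely_integrable_exp_fd[OF c'(1)]]) auto
  have "(\<lambda>x. x ^ k * exp (- (c - c') * x) * (exp (- c' * x) * fd 0 x))
      = (\<lambda>x. x ^ k * exp (- c * x) * f x)"
  proof
    fix x
    have "x ^ k * exp (- (c - c') * x) * (exp (- c' * x) * fd 0 x)
        = x ^ k * (exp (- (c - c') * x) * exp (- c' * x)) * f x"
      by (simp only: fd0 mult.assoc)
    also have "exp (- (c - c') * x) * exp (- c' * x) = exp (- c * x)"
      by (simp add: mult_exp_exp algebra_simps)
    finally show "x ^ k * exp (- (c - c') * x) * (exp (- c' * x) * fd 0 x) = x ^ k * exp (- c * x) * f x" .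
  qed
  with prod show ?thesis by simp
qed

definition moment :: "nat \<Rightarrow> real \<Rightarrow> real" where
  "moment k c = integral {0..} (\<lambda>x. x ^ k * exp (- c * x) * f x)"

lemma moment_integrable: "c \<in> region \<Longrightarrow> (\<lambda>x. x ^ k * exp (- c * x) * f x) integrable_on {0..}"
  using absolutely_integrable_power_exp_f by (simp add: absolutely_integrable_on_def)

lemma moment_nonneg: "c \<in> region \<Longrightarrow> 0 \<le> moment k c"
  unfolding moment_def by (rule integral_nonneg[OF moment_integrable]) (auto intro!: mult_nonneg_nonneg nonneg)

lemma moment_antimono:
  assumes "c \<in> region" "c \<le> d" shows "moment k d \<le> moment k c"
  unfolding moment_def
proof (rule integral_le[OF moment_integrable moment_integrable])
  show "d \<in> region" using region_mono assms by blast
  fix x :: real assume "x \<in> {0..}"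
  then show "x ^ k * exp (- d * x) * f x \<le> x ^ k * exp (- c * x) * f x"
    using assms(2) nonneg[of x] by (intro mult_right_mono mult_left_mono) (auto intro: mult_right_mono)
qed (use assms in auto)

lemma Lap_eq_moment: "c \<in> region \<Longrightarrow> Lap f c = moment 0 c"
  using integrable[of c 0] unfolding Lap_def moment_def
  by (simp add: region_def fd0 set_borel_integral_eq_integral(2))

lemma moment_first_order_taylor:
  assumes cd: "c - \<bar>d\<bar> \<in> region"
  shows "\<bar>moment k (c + d) - moment k c + d * moment (Suc k) c\<bar> \<le> d\<^sup>2/2 * moment (k + 2) (c - \<bar>d\<bar>)"
proof -
  define w where "w k c x = x ^ k * exp (- c * x) * f x" for k c x
  have int: "w j c' integrable_on {0..}" if "c' \<in> region" for j c'
    unfolding w_def by (rule moment_integrable[OF that])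
  have "c \<in> region" "c + d \<in> region" using region_mono[OF cd] by auto
  note int = int[OF this(1)] int[OF this(2)] int[OF cd]
  have eq: "moment k (c + d) - moment k c + d * moment (Suc k) c
      = integral {0..} (\<lambda>x. w k (c + d) x - w k c x + d * w (Suc k) c x)"
    unfolding moment_def w_def[symmetric]
    by (intro integral_unique[symmetric] has_integral_diff has_integral_add has_integral_mult_right
        integrable_integral int)
  have "norm (integral {0..} (\<lambda>x. w k (c + d) x - w k c x + d * w (Suc k) c x))
      \<le> integral {0..} (\<lambda>x. d\<^sup>2/2 * w (k + 2) (c - \<bar>d\<bar>) x)"
  proof (rule integral_norm_bound_integral)
    show "(\<lambda>x. w k (c + d) x - w k c x + d * w (Suc k) c x) integrable_on {0..}"
      using int by (auto intro!: integrable_diff integrable_add integrable_on_mult_right)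
    show "(\<lambda>x. d\<^sup>2/2 * w (k + 2) (c - \<bar>d\<bar>) x) integrable_on {0..}"
      using int by (auto intro: integrable_on_mult_right)
    fix x :: real assume "x \<in> {0..}"
    then have x: "0 \<le> x" by simp
    have w0: "0 \<le> w k c x" unfolding w_def using x nonneg[OF x] by simp
    have "w k (c + d) x - w k c x + d * w (Suc k) c x = w k c x * (exp (- (d * x)) - 1 + d * x)"
      unfolding w_def by (simp add: mult_exp_exp algebra_simps)
    also have "\<bar>\<dots>\<bar> \<le> w k c x * ((d * x)\<^sup>2/2 * exp \<bar>d * x\<bar>)"
      unfolding abs_mult[of "w k c x"] abs_of_nonneg[OF w0]
      using mult_left_mono[OF exp_minus_linear_remainder_bound w0] .
    also have "\<dots> = d\<^sup>2/2 * w (k + 2) (c - \<bar>d\<bar>) x"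
      unfolding w_def using x
      by (simp add: abs_mult mult_exp_exp algebra_simps power2_eq_square)
    finally show "norm (w k (c + d) x - w k c x + d * w (Suc k) c x) \<le> d\<^sup>2/2 * w (k + 2) (c - \<bar>d\<bar>) x"
      by simp
  qed
  then show ?thesis unfolding eq by (simp add: moment_def w_def)
qed

lemma moment0_second_order_taylor:
  assumes c: "c \<in> region" and d: "0 \<le> d"
  shows "\<bar>moment 0 (c + d) - moment 0 c + d * moment 1 c - d\<^sup>2/2 * moment 2 c\<bar> \<le> d ^ 3/6 * moment 3 c"
proof -
  define w where "w k c x = x ^ k * exp (- c * x) * f x" for k :: nat and c x
  have int: "w j c' integrable_on {0..}" if "c' \<in> region" for j c'
    unfolding w_def by (rule moment_integrable[OF that])
  have "c + d \<in> region" using region_mono c d by simp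
  note int = int[OF c] int[OF this]
  have eq: "moment 0 (c + d) - moment 0 c + d * moment 1 c - d\<^sup>2/2 * moment 2 c
      = integral {0..} (\<lambda>x. w 0 (c + d) x - w 0 c x + d * w 1 c x - d\<^sup>2/2 * w 2 c x)"
    unfolding moment_def w_def[symmetric]
    by (intro integral_unique[symmetric] has_integral_diff has_integral_add has_integral_mult_right
        integrable_integral int)
  have "norm (integral {0..} (\<lambda>x. w 0 (c + d) x - w 0 c x + d * w 1 c x - d\<^sup>2/2 * w 2 c x))
      \<le> integral {0..} (\<lambda>x. d ^ 3/6 * w 3 c x)"
  proof (rule integral_norm_bound_integral)
    show "(\<lambda>x. w 0 (c + d) x - w 0 c x + d * w 1 c x - d\<^sup>2/2 * w 2 c x) integrable_on {0..}"
      using int by (auto intro!: integrable_diff integrable_add integrable_on_mult_right)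
    show "(\<lambda>x. d ^ 3/6 * w 3 c x) integrable_on {0..}"
      using int by (auto intro: integrable_on_mult_right)
    fix x :: real assume "x \<in> {0..}"
    then have x: "0 \<le> x" by simp
    have w0: "0 \<le> w 0 c x" unfolding w_def using x nonneg[OF x] by simp
    have "w 0 (c + d) x - w 0 c x + d * w 1 c x - d\<^sup>2/2 * w 2 c x
        = w 0 c x * (exp (- (d * x)) - 1 + d * x - (d * x)\<^sup>2/2)"
      unfolding w_def by (simp add: mult_exp_exp algebra_simps power2_eq_square)
    also have "\<bar>\<dots>\<bar> \<le> w 0 c x * ((d * x) ^ 3/6)"
      unfolding abs_mult[of "w 0 c x"] abs_of_nonneg[OF w0] using x d
      by (intro mult_left_mono[OF exp_minus_quadratic_remainder_bound w0]) simp
    also have "\<dots> = d ^ 3/6 * w 3 c x"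
      unfolding w_def by (simp add: algebra_simps)
    finally show "norm (w 0 (c + d) x - w 0 c x + d * w 1 c x - d\<^sup>2/2 * w 2 c x) \<le> d ^ 3/6 * w 3 c x"
      by simp
  qed
  then show ?thesis unfolding eq by (simp add: moment_def w_def)
qed

lemma has_real_derivative_moment:
  assumes c: "c \<in> region" shows "(moment k has_real_derivative - moment (Suc k) c) (at c)"
proof -
  obtain c' where c': "c' \<in> region" "c' < c" using region_open_below c by blast
  define K where "K = moment (k + 2) c'"
  have "norm ((moment k (c + d) - moment k c) / d - (- moment (Suc k) c)) \<le> \<bar>d\<bar>/2 * K"
    if d: "d \<noteq> 0" "\<bar>d\<bar> < c - c'" for d :: real
  proof -
    have cd: "c - \<bar>d\<bar> \<in> region" using region_mono[OF c'(1)] d by simp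
    have "norm ((moment k (c + d) - moment k c) / d - (- moment (Suc k) c))
        = \<bar>moment k (c + d) - moment k c + d * moment (Suc k) c\<bar> / \<bar>d\<bar>"
      using d by (simp add: field_simps)
    also have "\<dots> \<le> (d\<^sup>2/2 * moment (k + 2) (c - \<bar>d\<bar>)) / \<bar>d\<bar>"
      by (rule divide_right_mono[OF moment_first_order_taylor[OF cd]]) simp
    also have "\<dots> = \<bar>d\<bar>/2 * moment (k + 2) (c - \<bar>d\<bar>)"
    proof -
      have "d\<^sup>2 = \<bar>d\<bar> * \<bar>d\<bar>" by (simp add: power2_eq_square)
      then show ?thesis using d by (simp add: field_simps)
    qed
    also have "\<dots> \<le> \<bar>d\<bar>/2 * K"
      unfolding K_def using d by (intro mult_left_mono moment_antimono[OF c'(1)]) auto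
    finally show ?thesis .
  qed
  then have "\<forall>\<^sub>F d in at 0. norm ((moment k (c + d) - moment k c) / d - (- moment (Suc k) c)) \<le> \<bar>d\<bar>/2 * K"
    unfolding eventually_at using c' by (auto simp: dist_real_def intro!: exI[of _ "c - c'"])
  moreover have "((\<lambda>d. \<bar>d\<bar>/2 * K) \<longlongrightarrow> 0) (at (0::real))"
    by (auto intro!: tendsto_eq_intros)
  ultimately show ?thesis
    unfolding DERIV_def by (subst Lim_null) (rule Lim_null_comparison)
qed

lemma deriv_Lap: assumes c: "c \<in> region" shows "deriv (Lap f) c = - moment 1 c"
proof -
  obtain c' where c': "c' \<in> region" "c' < c" using region_open_below c by blast
  have "(Lap f has_real_derivative - moment 1 c) (at c)"
  proof (rule has_field_derivative_transform_within_open)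
    show "(moment 0 has_real_derivative - moment 1 c) (at c)"
      using has_real_derivative_moment[OF c, of 0] by simp
    show "moment 0 x = Lap f x" if "x \<in> {c'<..}" for x
      using region_mono[OF c'(1)] that by (simp add: Lap_eq_moment)
  qed (use c' in auto)
  then show ?thesis by (rule DERIV_imp_deriv)
qed

lemma deriv2_Lap: assumes c: "c \<in> region" shows "deriv (deriv (Lap f)) c = moment 2 c"
proof -
  obtain c' where c': "c' \<in> region" "c' < c" using region_open_below c by blast
  have "(deriv (Lap f) has_real_derivative moment 2 c) (at c)"
  proof (rule has_field_derivative_transform_within_open)
    show "((\<lambda>x. - moment 1 x) has_real_derivative moment 2 c) (at c)"
      using has_real_derivative_moment[OF c, of 1] DERIV_minus by (fastforce simp: numeral_2_eq_2)
    show "- moment 1 x = deriv (Lap f) x" if "x \<in> {c'<..}" for x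
      using region_mono[OF c'(1)] that by (simp add: deriv_Lap)
  qed (use c' in auto)
  then show ?thesis by (rule DERIV_imp_deriv)
qed

definition lattice_sum :: "real \<Rightarrow> real \<Rightarrow> real" where
  "lattice_sum h \<gamma> = (\<Sum>n. f (real (n + 1) * h) * (1 - \<gamma> * h) ^ (n + 1))"

lemma lattice_term_le:
  assumes h: "0 < h" and r: "0 \<le> 1 - \<gamma> * h" and x: "x \<in> {real n * h..real n * h + h}"
  shows "f (real (n + 1) * h) * (1 - \<gamma> * h) ^ (n + 1) \<le> exp (\<bar>\<gamma>\<bar> * h) * (exp (- \<gamma> * x) * f x)"
proof -
  have x0: "0 \<le> x" using x h by (auto intro: order_trans[rotated])
  have node: "real (n + 1) * h = real n * h + h" by (simp add: algebra_simps)
  have "\<gamma> * x - \<gamma> * (real n * h + h) \<le> \<bar>\<gamma>\<bar> * h"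
  proof -
    have "\<gamma> * (x - (real n * h + h)) \<le> \<bar>\<gamma>\<bar> * \<bar>x - (real n * h + h)\<bar>"
      by (metis abs_ge_self abs_mult)
    also have "\<dots> \<le> \<bar>\<gamma>\<bar> * h" using x h by (intro mult_left_mono) auto
    finally show ?thesis by (simp add: algebra_simps)
  qed
  then have "exp (- \<gamma> * h) ^ (n + 1) \<le> exp (\<bar>\<gamma>\<bar> * h) * exp (- \<gamma> * x)"
    by (simp add: exp_of_nat_mult[symmetric] mult_exp_exp node algebra_simps)
  moreover have "(1 - \<gamma> * h) ^ (n + 1) \<le> exp (- \<gamma> * h) ^ (n + 1)"
    using r exp_ge_add_one_self[of "- \<gamma> * h"] by (intro power_mono) auto
  ultimately have "(1 - \<gamma> * h) ^ (n + 1) \<le> exp (\<bar>\<gamma>\<bar> * h) * exp (- \<gamma> * x)" by linarith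
  moreover have "f (real (n + 1) * h) \<le> f x" unfolding node using x x0 by (intro noninc) auto
  ultimately have "f (real (n + 1) * h) * (1 - \<gamma> * h) ^ (n + 1) \<le> f x * (exp (\<bar>\<gamma>\<bar> * h) * exp (- \<gamma> * x))"
    using nonneg[OF x0] r by (intro mult_mono) auto
  then show ?thesis by (simp add: mult_ac)
qed

lemma lattice_sum_bounds:
  assumes \<gamma>: "\<gamma> \<in> region" and h: "0 < h" and r: "0 \<le> 1 - \<gamma> * h"
  shows "summable (\<lambda>n. f (real (n + 1) * h) * (1 - \<gamma> * h) ^ (n + 1))"
    and "0 \<le> lattice_sum h \<gamma>" and "lattice_sum h \<gamma> \<le> exp (\<bar>\<gamma>\<bar> * h) / h * Lap f \<gamma>"
proof -
  define t where "t n = f (real (n + 1) * h) * (1 - \<gamma> * h) ^ (n + 1)" for n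
  define \<phi> where "\<phi> x = exp (\<bar>\<gamma>\<bar> * h) * (exp (- \<gamma> * x) * f x)" for x
  have \<phi>_int: "\<phi> integrable_on {0..}"
    unfolding \<phi>_def using moment_integrable[OF \<gamma>, of 0] by (intro integrable_on_mult_right) simp
  have t_nonneg: "0 \<le> t n" for n unfolding t_def using r h by (intro mult_nonneg_nonneg nonneg) auto
  have partial: "(\<Sum>n<N. t n) \<le> exp (\<bar>\<gamma>\<bar> * h) / h * Lap f \<gamma>" for N
  proof -
    have "h * (\<Sum>n<N. t n) = (\<Sum>n<N. integral {real n * h..real n * h + h} (\<lambda>x. t n))"
      using h by (simp add: sum_distrib_left)
    also have "\<dots> \<le> (\<Sum>n<N. integral {real n * h..real n * h + h} \<phi>)"
    proof (intro sum_mono integral_le)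
      fix n show "\<phi> integrable_on {real n * h..real n * h + h}"
        using h by (intro integrable_on_subinterval[OF \<phi>_int]) auto
    qed (use lattice_term_le[OF h r] in \<open>auto simp: t_def \<phi>_def\<close>)
    also have "\<dots> = integral {0..real N * h} \<phi>"
      using h by (intro integral_sum_cells[symmetric] integrable_on_subinterval[OF \<phi>_int]) auto
    also have "\<dots> \<le> integral {0..} \<phi>"
      using h \<phi>_int by (intro integral_subset_le integrable_on_subinterval[OF \<phi>_int])
        (auto simp: \<phi>_def intro!: mult_nonneg_nonneg nonneg)
    also have "\<dots> = exp (\<bar>\<gamma>\<bar> * h) * Lap f \<gamma>"
      unfolding \<phi>_def[abs_def] by (simp add: Lap_eq_moment[OF \<gamma>] moment_def)
    finally show ?thesis using h by (simp add: field_simps)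
  qed
  have "summable t" by (rule summableI_nonneg_bounded[OF t_nonneg partial])
  then show "summable (\<lambda>n. f (real (n + 1) * h) * (1 - \<gamma> * h) ^ (n + 1))"
    and "0 \<le> lattice_sum h \<gamma>" and "lattice_sum h \<gamma> \<le> exp (\<bar>\<gamma>\<bar> * h) / h * Lap f \<gamma>"
    unfolding lattice_sum_def t_def[symmetric]
    using suminf_nonneg[OF _ t_nonneg] suminf_le_const[OF _ partial] by auto
qed

definition em_majorant :: "real \<Rightarrow> real \<Rightarrow> real \<Rightarrow> real" where
  "em_majorant a B x = (\<Sum>i\<le>4. of_nat (4 choose i) * B ^ (4 - i) * \<bar>exp (- a * x) * fd i x\<bar>)"

lemma em_majorant_integrable: "a \<in> region \<Longrightarrow> em_majorant a B integrable_on {0..}"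
  unfolding em_majorant_def using absolutely_integrable_exp_fd[of a]
  by (intro integrable_sum integrable_on_mult_right) (auto simp: absolutely_integrable_on_def)

lemma lattice_sum_euler_maclaurin:
  assumes \<beta>: "\<beta> \<in> region" and a: "a \<in> region" "a \<le> \<beta>" and B: "\<bar>\<beta>\<bar> \<le> B" and h: "0 < h"
    and sm: "summable (\<lambda>n. exp (- \<beta> * (real n * h + h)) * f (real n * h + h))"
  shows "\<bar>h * (\<Sum>n. exp (- \<beta> * (real n * h + h)) * f (real n * h + h))
           - (Lap f \<beta> - h/2 - h\<^sup>2/12 * (fd 1 0 - \<beta>))\<bar>
         \<le> h ^ 4 / 384 * integral {0..} (em_majorant a B)"
proof -
  define g where "g = exp_damped \<beta> fd"
  have g0: "g 0 x = exp (- \<beta> * x) * f x" and g1: "g 1 x = exp (- \<beta> * x) * fd 1 x - \<beta> * g 0 x" for x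
    by (simp only: g_def exp_damped_0 exp_damped_1 fd0)+
  have g0_eq: "g 0 = (\<lambda>x. exp (- \<beta> * x) * f x)" by (intro ext g0)
  have g1_eq: "g 1 = (\<lambda>x. exp (- \<beta> * x) * fd 1 x - \<beta> * g 0 x)" by (intro ext g1)
  have g_at_0: "g 0 0 = 1" "g 1 0 = fd 1 0 - \<beta>"
    by (simp_all only: g0 g1) (simp_all add: f0 fd0)
  have v0: "(g 0 \<longlongrightarrow> 0) at_top"
    using vanish[of \<beta> 0] \<beta> by (simp add: g0_eq fd0 region_def)
  have "\<bar>h * (\<Sum>n. g 0 (real n * h + h)) - (integral {0..} (g 0) - h/2 * g 0 0 - h\<^sup>2/12 * g 1 0)\<bar>
      \<le> h ^ 4 / 384 * integral {0..} (em_majorant a B)"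
  proof (rule euler_maclaurin_series[where u=g and P="em_majorant a B",
        OF h _ em_majorant_integrable[OF a(1)] _ _ v0])
    show "(g k has_real_derivative g (Suc k) x) (at x within {0..})" if "k < 4" "0 \<le> x" for k x
      unfolding g_def using that fd_deriv by (intro has_real_derivative_exp_damped) auto
    show "\<bar>g 4 x\<bar> \<le> em_majorant a B x" if "0 \<le> x" for x
      unfolding g_def em_majorant_def using abs_exp_damped_le[OF a(2) B that] by simp
    show "g 0 absolutely_integrable_on {0..}"
      using absolutely_integrable_exp_fd[OF \<beta>, of 0] by (simp add: g0_eq fd0)
    show "(g 1 \<longlongrightarrow> 0) at_top"
      unfolding g1_eq using tendsto_diff[OF vanish[of \<beta> 1] tendsto_mult_right_zero[OF v0, of \<beta>]] \<beta>
      by (simp add: region_def)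
    show "summable (\<lambda>n. g 0 (real n * h + h))" using sm by (simp add: g0)
  qed
  moreover have "integral {0..} (g 0) = Lap f \<beta>" by (simp add: Lap_eq_moment[OF \<beta>] moment_def g0_eq)
  ultimately show ?thesis unfolding g_at_0 by (simp add: g0 right_diff_distrib)
qed

lemma Mcal_eq: "\<gamma> \<in> region \<Longrightarrow> Mcal f \<gamma> = 1/2 * \<gamma>\<^sup>2 * (- moment 1 \<gamma>) - 1/2"
  by (simp add: Mcal_def deriv_Lap)

lemma Ncal_eq:
  "\<gamma> \<in> region \<Longrightarrow>
     Ncal f fp \<gamma> = 1/3 * \<gamma>^3 * (- moment 1 \<gamma>) + 1/8 * \<gamma>^4 * moment 2 \<gamma> + 1/12 * (\<gamma> - fp)"
  by (simp add: Ncal_def deriv_Lap deriv2_Lap)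

lemma exp_lattice_term:
  assumes "exp (- \<beta> * h) = \<rho>"
  shows "exp (- \<beta> * (real n * h + h)) * f (real n * h + h) = f (real (n + 1) * h) * \<rho> ^ (n + 1)"
proof -
  have "exp (- \<beta> * (real n * h + h)) = \<rho> ^ (n + 1)"
    unfolding assms[symmetric] exp_of_nat_mult[symmetric] by (simp add: algebra_simps)
  moreover have "real (n + 1) * h = real n * h + h" by (simp add: algebra_simps)
  ultimately show ?thesis by (simp only: mult.commute)
qed

lemma lattice_sum_second_order:
  assumes a: "a \<in> region" and \<Gamma>: "1 \<le> \<Gamma>" "\<bar>a\<bar> \<le> \<Gamma>"
  obtains C where "\<And>h \<gamma>. 0 < h \<Longrightarrow> \<Gamma> * h \<le> 1/2 \<Longrightarrow> a \<le> \<gamma> \<Longrightarrow> \<gamma> \<le> \<Gamma> \<Longrightarrow>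
    \<bar>lattice_sum h \<gamma> - (Lap f \<gamma> / h + Mcal f \<gamma>) - h * Ncal f (fd 1 0) \<gamma>\<bar> \<le> C * h\<^sup>2"
proof
  define P where "P = integral {0..} (em_majorant a (2 * \<Gamma>))"
  fix h \<gamma> assume h: "0 < h" and small: "\<Gamma> * h \<le> 1/2" and \<gamma>: "a \<le> \<gamma>" "\<gamma> \<le> \<Gamma>"
  have \<gamma>_reg: "\<gamma> \<in> region" using region_mono[OF a \<gamma>(1)] .
  have \<gamma>\<Gamma>: "\<bar>\<gamma>\<bar> \<le> \<Gamma>" using \<gamma> \<Gamma> by linarith
  define D where "D = (- ln (1 - \<gamma> * h) / h - \<gamma>) / h"
  note D = rate_correction_bounds[OF h \<gamma>\<Gamma> \<Gamma>(1) small, folded D_def]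
  define \<beta> where "\<beta> = \<gamma> + h * D"
  have hD: "0 \<le> h * D" using D(2) h by simp
  have \<beta>: "\<beta> \<in> region" "a \<le> \<beta>" "\<bar>\<beta>\<bar> \<le> 2 * \<Gamma>"
    using region_mono[OF \<gamma>_reg] \<gamma> \<gamma>\<Gamma> hD D(3) by (auto simp: \<beta>_def)
  note terms = exp_lattice_term[OF D(1)[folded \<beta>_def]]
  have "0 \<le> 1 - \<gamma> * h" by (simp flip: D(1))
  then have "summable (\<lambda>n. exp (- \<beta> * (real n * h + h)) * f (real n * h + h))"
    unfolding terms by (rule lattice_sum_bounds(1)[OF \<gamma>_reg h])
  from lattice_sum_euler_maclaurin[OF \<beta>(1) a \<beta>(2,3) h this]
  have em: "\<bar>h * lattice_sum h \<gamma> - (Lap f \<beta> - h/2 - h\<^sup>2/12 * (fd 1 0 - \<beta>))\<bar> \<le> h ^ 4 / 384 * P"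
    unfolding terms lattice_sum_def P_def .
  have taylor: "\<bar>Lap f \<beta> - (moment 0 \<gamma> - (h * D) * moment 1 \<gamma> + (h * D)\<^sup>2/2 * moment 2 \<gamma>)\<bar>
      \<le> (h * D) ^ 3 / 6 * moment 3 \<gamma>"
    using moment0_second_order_taylor[OF \<gamma>_reg hD]
    unfolding Lap_eq_moment[OF \<beta>(1)] unfolding \<beta>_def by (simp add: algebra_simps)
  have identity: "lattice_sum h \<gamma> - (Lap f \<gamma> / h + Mcal f \<gamma>) - h * Ncal f (fd 1 0) \<gamma>
    = - moment 1 \<gamma> * (D - \<gamma>\<^sup>2/2 - \<gamma>^3*h/3) + h/2 * moment 2 \<gamma> * (D\<^sup>2 - \<gamma>^4/4)
      + (Lap f \<beta> - (moment 0 \<gamma> - (h * D) * moment 1 \<gamma> + (h * D)\<^sup>2/2 * moment 2 \<gamma>)) / h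
      + h\<^sup>2 * D / 12 - (Lap f \<beta> - h/2 - h\<^sup>2/12 * (fd 1 0 - \<beta>) - h * lattice_sum h \<gamma>) / h"
    unfolding Mcal_eq[OF \<gamma>_reg] Ncal_eq[OF \<gamma>_reg] Lap_eq_moment[OF \<gamma>_reg]
    using h by (intro second_order_remainder_identity[where \<beta>=\<beta>]) (simp_all add: \<beta>_def)
  show "\<bar>lattice_sum h \<gamma> - (Lap f \<gamma> / h + Mcal f \<gamma>) - h * Ncal f (fd 1 0) \<gamma>\<bar>
      \<le> (2 * \<Gamma>^4 * moment 1 a + 3 * \<Gamma>^5 * moment 2 a + 4/3 * \<Gamma>^6 * moment 3 a + \<Gamma>\<^sup>2/6 + P) * h\<^sup>2"
    unfolding identity
  proof (rule second_order_remainder_bound[where M\<^sub>1="moment 1 a" and M\<^sub>2="moment 2 a"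
        and M\<^sub>3="moment 3 a" and m\<^sub>3="moment 3 \<gamma>" and P=P])
    have "1 * h \<le> \<Gamma> * h" using h by (intro mult_right_mono[OF \<Gamma>(1)]) simp
    then show "h \<le> 1" using small by linarith
    show "0 \<le> P" unfolding P_def using em_majorant_integrable[OF a] \<Gamma>
      by (intro integral_nonneg) (auto simp: em_majorant_def intro!: sum_nonneg)
    show "\<bar>Lap f \<beta> - h/2 - h\<^sup>2/12 * (fd 1 0 - \<beta>) - h * lattice_sum h \<gamma>\<bar> \<le> h ^ 4 / 384 * P"
      using em by (simp add: abs_minus_commute)
  qed (use h \<Gamma> in linarith | rule moment_nonneg[OF \<gamma>_reg] moment_antimono[OF a \<gamma>(1)]
      | fact D(2,4-6) taylor)+
qed

lemma abs_power_moment_le: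
  assumes a: "a \<in> region" "a \<le> \<gamma>" and \<gamma>: "\<bar>\<gamma>\<bar> \<le> \<Gamma>"
  shows "\<bar>\<gamma> ^ n * moment k \<gamma>\<bar> \<le> \<Gamma> ^ n * moment k a"
proof -
  have \<gamma>_reg: "\<gamma> \<in> region" using region_mono[OF a] .
  have "\<bar>\<gamma>\<bar> ^ n \<le> \<Gamma> ^ n" using \<gamma> by (intro power_mono) auto
  then show ?thesis
    unfolding abs_mult power_abs abs_of_nonneg[OF moment_nonneg[OF \<gamma>_reg]]
    using \<gamma> moment_nonneg[OF \<gamma>_reg] moment_antimono[OF a] by (intro mult_mono) auto
qed

lemma abs_Mcal_le:
  assumes a: "a \<in> region" "a \<le> \<gamma>" and \<gamma>: "\<bar>\<gamma>\<bar> \<le> \<Gamma>"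
  shows "\<bar>Mcal f \<gamma>\<bar> \<le> \<Gamma>\<^sup>2/2 * moment 1 a + 1/2"
  using abs_power_moment_le[OF a \<gamma>, of 2 1] region_mono[OF a]
  by (simp add: Mcal_eq abs_le_iff)

lemma abs_Ncal_le:
  assumes a: "a \<in> region" "a \<le> \<gamma>" and \<gamma>: "\<bar>\<gamma>\<bar> \<le> \<Gamma>"
  shows "\<bar>Ncal f fp \<gamma>\<bar> \<le> \<Gamma>^3 * moment 1 a / 3 + \<Gamma>^4 * moment 2 a / 8 + (\<Gamma> + \<bar>fp\<bar>) / 12"
proof -
  define X where "X = \<gamma>^3 * moment 1 \<gamma>"
  define Y where "Y = \<gamma>^4 * moment 2 \<gamma>"
  have "Ncal f fp \<gamma> = - X/3 + Y/8 + (\<gamma> - fp)/12"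
    using region_mono[OF a] by (simp add: Ncal_eq X_def Y_def)
  then have "\<bar>Ncal f fp \<gamma>\<bar> \<le> \<bar>X\<bar>/3 + \<bar>Y\<bar>/8 + \<bar>\<gamma> - fp\<bar>/12"
    using abs_triangle_ineq[of "- X/3 + Y/8" "(\<gamma> - fp)/12"] abs_triangle_ineq[of "- X/3" "Y/8"] by simp
  also have "\<dots> \<le> \<Gamma>^3 * moment 1 a / 3 + \<Gamma>^4 * moment 2 a / 8 + (\<Gamma> + \<bar>fp\<bar>) / 12"
    unfolding X_def Y_def using abs_power_moment_le[OF a \<gamma>] \<gamma>
    by (intro add_mono divide_right_mono) auto
  finally show ?thesis .
qed

lemma lattice_sum_crude_bound:
  assumes a: "a \<in> region" "a \<le> \<gamma>" and \<gamma>: "\<bar>\<gamma>\<bar> \<le> \<Gamma>"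
    and h: "0 < h" "h \<le> 1" "1 / h \<le> 2 * \<Gamma>" and r: "0 \<le> 1 - \<gamma> * h"
  shows "\<bar>lattice_sum h \<gamma> - (Lap f \<gamma> / h + Mcal f \<gamma>)\<bar>
     \<le> 2 * \<Gamma> * exp \<Gamma> * moment 0 a + 2 * \<Gamma> * moment 0 a + (\<Gamma>\<^sup>2/2 * moment 1 a + 1/2)"
proof -
  have \<gamma>_reg: "\<gamma> \<in> region" using region_mono[OF a] .
  have \<Gamma>0: "0 \<le> \<Gamma>" using \<gamma> by linarith
  have m\<^sub>0: "0 \<le> moment 0 \<gamma>" "moment 0 \<gamma> \<le> moment 0 a"
    using moment_nonneg[OF \<gamma>_reg] moment_antimono[OF a] by auto
  have "\<bar>\<gamma>\<bar> * h \<le> \<Gamma> * 1" using \<gamma> h by (intro mult_mono) auto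
  then have "exp (\<bar>\<gamma>\<bar> * h) \<le> exp \<Gamma>" by simp
  then have "exp (\<bar>\<gamma>\<bar> * h) * (1 / h) * moment 0 \<gamma> \<le> exp \<Gamma> * (2 * \<Gamma>) * moment 0 a"
    using h m\<^sub>0 \<Gamma>0 by (intro mult_mono) auto
  then have "lattice_sum h \<gamma> \<le> 2 * \<Gamma> * exp \<Gamma> * moment 0 a"
    using lattice_sum_bounds(3)[OF \<gamma>_reg h(1) r] by (simp add: Lap_eq_moment[OF \<gamma>_reg] mult_ac)
  moreover have "Lap f \<gamma> / h \<le> 2 * \<Gamma> * moment 0 a"
    using mult_mono[OF h(3) m\<^sub>0(2)] h m\<^sub>0 \<Gamma>0 by (simp add: Lap_eq_moment[OF \<gamma>_reg])
  moreover have "0 \<le> Lap f \<gamma> / h" using h m\<^sub>0 by (simp add: Lap_eq_moment[OF \<gamma>_reg])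
  ultimately show ?thesis
    using lattice_sum_bounds(2)[OF \<gamma>_reg h(1) r] abs_Mcal_le[OF a \<gamma>] by (simp add: abs_le_iff)
qed

lemma lattice_sum_first_order:
  assumes a: "a \<in> region" and \<Gamma>: "1 \<le> \<Gamma>" "\<bar>a\<bar> \<le> \<Gamma>"
  obtains C where "\<And>h \<gamma>. 0 < h \<Longrightarrow> h \<le> 1 \<Longrightarrow> a \<le> \<gamma> \<Longrightarrow> \<gamma> \<le> \<Gamma> \<Longrightarrow> 0 \<le> 1 - \<gamma> * h \<Longrightarrow>
    \<bar>lattice_sum h \<gamma> - (Lap f \<gamma> / h + Mcal f \<gamma>)\<bar> \<le> C * h"
proof -
  obtain C\<^sub>2 where second: "\<And>h \<gamma>. 0 < h \<Longrightarrow> \<Gamma> * h \<le> 1/2 \<Longrightarrow> a \<le> \<gamma> \<Longrightarrow> \<gamma> \<le> \<Gamma> \<Longrightarrow>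
      \<bar>lattice_sum h \<gamma> - (Lap f \<gamma> / h + Mcal f \<gamma>) - h * Ncal f (fd 1 0) \<gamma>\<bar> \<le> C\<^sub>2 * h\<^sup>2"
    using lattice_sum_second_order[OF a \<Gamma>] by blast
  define N where "N = \<Gamma>^3 * moment 1 a / 3 + \<Gamma>^4 * moment 2 a / 8 + (\<Gamma> + \<bar>fd 1 0\<bar>) / 12"
  define B where "B = 2 * \<Gamma> * exp \<Gamma> * moment 0 a + 2 * \<Gamma> * moment 0 a + (\<Gamma>\<^sup>2/2 * moment 1 a + 1/2)"
  have "0 \<le> N" "0 \<le> B" using moment_nonneg[OF a] \<Gamma> by (simp_all add: N_def B_def)
  show thesis
  proof (rule that[of "\<bar>C\<^sub>2\<bar> + N + 2 * \<Gamma> * B"])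
    fix h \<gamma> assume h: "0 < h" "h \<le> 1" and \<gamma>: "a \<le> \<gamma>" "\<gamma> \<le> \<Gamma>" and r: "0 \<le> 1 - \<gamma> * h"
    have \<gamma>\<Gamma>: "\<bar>\<gamma>\<bar> \<le> \<Gamma>" using \<gamma> \<Gamma> by linarith
    show "\<bar>lattice_sum h \<gamma> - (Lap f \<gamma> / h + Mcal f \<gamma>)\<bar> \<le> (\<bar>C\<^sub>2\<bar> + N + 2 * \<Gamma> * B) * h"
    proof (cases "\<Gamma> * h \<le> 1/2")
      case True
      have "C\<^sub>2 * h\<^sup>2 \<le> \<bar>C\<^sub>2\<bar> * h\<^sup>2" by (intro mult_right_mono) auto
      also have "\<dots> \<le> \<bar>C\<^sub>2\<bar> * h"
        unfolding power2_eq_square using h by (intro mult_left_mono mult_left_le_one_le) auto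
      finally have "C\<^sub>2 * h\<^sup>2 \<le> \<bar>C\<^sub>2\<bar> * h" .
      moreover have "\<bar>h * Ncal f (fd 1 0) \<gamma>\<bar> \<le> N * h"
        using mult_left_mono[OF abs_Ncal_le[OF a \<gamma>(1) \<gamma>\<Gamma>], of h] h by (simp add: N_def abs_mult mult_ac)
      moreover have "0 \<le> 2 * \<Gamma> * B * h" using \<open>0 \<le> B\<close> \<Gamma> h by simp
      ultimately show ?thesis using second[OF h(1) True \<gamma>] by (simp add: algebra_simps abs_le_iff)
    next
      case False
      then have "1 / h \<le> 2 * \<Gamma>" using h by (simp add: field_simps)
      from lattice_sum_crude_bound[OF a \<gamma>(1) \<gamma>\<Gamma> h this r]
      have "\<bar>lattice_sum h \<gamma> - (Lap f \<gamma> / h + Mcal f \<gamma>)\<bar> \<le> B * 1" by (simp add: B_def)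
      also have "\<dots> \<le> B * (2 * \<Gamma> * h)" using False \<open>0 \<le> B\<close> by (intro mult_left_mono) auto
      also have "\<dots> \<le> (\<bar>C\<^sub>2\<bar> + N + 2 * \<Gamma> * B) * h" using \<open>0 \<le> N\<close> h by (simp add: algebra_simps)
      finally show ?thesis .
    qed
  qed
qed

lemma Fs_eq_lattice_sum: "Fs f s (1 - \<gamma> / sqrt s) = lattice_sum (1 / sqrt s) \<gamma>"
  by (simp add: Fs_def lattice_sum_def)

lemma Fs_first_order:
  assumes K: "compact K" "K \<subseteq> {\<gamma>. ereal \<gamma> > gamma_min f}"
  shows "\<exists>C. \<forall>s \<gamma>. s \<ge> 1 \<and> \<gamma> \<in> K \<and> \<gamma> \<le> sqrt s \<longrightarrow>
           summable (\<lambda>n. f (real (n + 1) / sqrt s) * (1 - \<gamma> / sqrt s) ^ (n + 1)) \<and>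
           \<bar>Fs f s (1 - \<gamma> / sqrt s) - (sqrt s * Lap f \<gamma> + Mcal f \<gamma>)\<bar> \<le> C / sqrt s"
proof (cases "K = {}")
  case False
  obtain a where a: "a \<in> K" "\<forall>t\<in>K. a \<le> t" using compact_attains_inf[OF K(1) False] by blast
  obtain b where b: "\<forall>t\<in>K. t \<le> b" using compact_attains_sup[OF K(1) False] by blast
  define \<Gamma> where "\<Gamma> = max 1 (max \<bar>a\<bar> b)"
  have K_reg: "K \<subseteq> region" using K(2) by (auto simp: region_def)
  have "a \<in> region" "1 \<le> \<Gamma>" "\<bar>a\<bar> \<le> \<Gamma>" using a(1) K_reg by (auto simp: \<Gamma>_def)
  from lattice_sum_first_order[OF this] obtain C where
    C: "\<And>h \<gamma>. 0 < h \<Longrightarrow> h \<le> 1 \<Longrightarrow> a \<le> \<gamma> \<Longrightarrow> \<gamma> \<le> \<Gamma> \<Longrightarrow> 0 \<le> 1 - \<gamma> * h \<Longrightarrow>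
      \<bar>lattice_sum h \<gamma> - (Lap f \<gamma> / h + Mcal f \<gamma>)\<bar> \<le> C * h"
    by blast
  show ?thesis
  proof (intro exI[of _ C] allI impI conjI)
    fix s \<gamma> assume "1 \<le> s \<and> \<gamma> \<in> K \<and> \<gamma> \<le> sqrt s"
    then have s: "1 \<le> sqrt s" and \<gamma>: "\<gamma> \<in> K" "\<gamma> \<le> sqrt s" by auto
    have r: "0 \<le> 1 - \<gamma> * (1 / sqrt s)" using \<gamma>(2) s by (simp add: field_simps)
    show "summable (\<lambda>n. f (real (n + 1) / sqrt s) * (1 - \<gamma> / sqrt s) ^ (n + 1))"
      using lattice_sum_bounds(1)[OF _ _ r] \<gamma>(1) K_reg s by auto
    have "\<bar>lattice_sum (1 / sqrt s) \<gamma> - (Lap f \<gamma> / (1 / sqrt s) + Mcal f \<gamma>)\<bar> \<le> C * (1 / sqrt s)"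
      using C[OF _ _ _ _ r] a b \<gamma>(1) s by (force simp: \<Gamma>_def)
    then show "\<bar>Fs f s (1 - \<gamma> / sqrt s) - (sqrt s * Lap f \<gamma> + Mcal f \<gamma>)\<bar> \<le> C / sqrt s"
      by (simp add: Fs_eq_lattice_sum mult.commute)
  qed
qed simp

lemma Fs_second_order:
  assumes \<gamma>: "ereal \<gamma> > gamma_min f"
  shows "((\<lambda>s. sqrt s * (Fs f s (1 - \<gamma> / sqrt s) - (sqrt s * Lap f \<gamma> + Mcal f \<gamma>)))
           \<longlongrightarrow> Ncal f (fd 1 0) \<gamma>) at_top"
proof -
  define \<Gamma> where "\<Gamma> = max 1 \<bar>\<gamma>\<bar>"
  have \<Gamma>: "1 \<le> \<Gamma>" "\<bar>\<gamma>\<bar> \<le> \<Gamma>" by (auto simp: \<Gamma>_def)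
  obtain C where C: "\<And>h \<gamma>'. 0 < h \<Longrightarrow> \<Gamma> * h \<le> 1/2 \<Longrightarrow> \<gamma> \<le> \<gamma>' \<Longrightarrow> \<gamma>' \<le> \<Gamma> \<Longrightarrow>
      \<bar>lattice_sum h \<gamma>' - (Lap f \<gamma>' / h + Mcal f \<gamma>') - h * Ncal f (fd 1 0) \<gamma>'\<bar> \<le> C * h\<^sup>2"
    using lattice_sum_second_order[of \<gamma> \<Gamma>] \<gamma> \<Gamma> by (auto simp: region_def)
  have "\<forall>\<^sub>F s in at_top. norm (sqrt s * (Fs f s (1 - \<gamma> / sqrt s) - (sqrt s * Lap f \<gamma> + Mcal f \<gamma>))
      - Ncal f (fd 1 0) \<gamma>) \<le> \<bar>C\<bar> / sqrt s"
  proof (rule eventually_at_top_linorderI[of "4 * \<Gamma>\<^sup>2"])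
    fix s assume "4 * \<Gamma>\<^sup>2 \<le> s"
    then have s: "2 * \<Gamma> \<le> sqrt s" by (intro real_le_rsqrt) (simp add: power_mult_distrib)
    then have pos: "0 < sqrt s" using \<Gamma> by linarith
    have "\<Gamma> * (1 / sqrt s) \<le> 1/2" using s pos by (simp add: field_simps)
    have "sqrt s * (Fs f s (1 - \<gamma> / sqrt s) - (sqrt s * Lap f \<gamma> + Mcal f \<gamma>)) - Ncal f (fd 1 0) \<gamma>
        = sqrt s * (lattice_sum (1 / sqrt s) \<gamma> - (Lap f \<gamma> / (1 / sqrt s) + Mcal f \<gamma>)
            - 1 / sqrt s * Ncal f (fd 1 0) \<gamma>)"
      unfolding Fs_eq_lattice_sum using pos by (simp add: field_simps)
    also have "norm \<dots> \<le> sqrt s * (C * (1 / sqrt s)\<^sup>2)"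
      unfolding real_norm_def abs_mult abs_of_pos[OF pos]
      using pos C[OF _ \<open>\<Gamma> * (1 / sqrt s) \<le> 1/2\<close> order_refl] \<Gamma> by (intro mult_left_mono) auto
    also have "\<dots> = C / sqrt s" using pos by (simp add: power2_eq_square field_simps)
    also have "\<dots> \<le> \<bar>C\<bar> / sqrt s" using pos by (simp add: divide_right_mono)
    finally show "norm (sqrt s * (Fs f s (1 - \<gamma> / sqrt s) - (sqrt s * Lap f \<gamma> + Mcal f \<gamma>))
      - Ncal f (fd 1 0) \<gamma>) \<le> \<bar>C\<bar> / sqrt s" .
  qed
  moreover have "((\<lambda>s. \<bar>C\<bar> / sqrt s) \<longlongrightarrow> 0) at_top"
    by (rule tendsto_divide_0[OF tendsto_const filterlim_at_top_imp_at_infinity[OF sqrt_at_top]])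
  ultimately show ?thesis by (subst Lim_null) (rule Lim_null_comparison)
qed

end

theorem theorem4p2:
  fixes f :: "real \<Rightarrow> real" and fd :: "nat \<Rightarrow> real \<Rightarrow> real"
  assumes nonneg: "\<And>x. x \<ge> 0 \<Longrightarrow> f x \<ge> 0"
    and noninc: "\<And>x y. 0 \<le> x \<Longrightarrow> x \<le> y \<Longrightarrow> f y \<le> f x"
    and f0: "f 0 = 1"
    and fd0: "fd 0 = f"
    and fd_deriv: "\<And>j x. j < 4 \<Longrightarrow> x \<ge> 0 \<Longrightarrow>
                     (fd j has_real_derivative fd (Suc j) x) (at x within {0..})"
    and fd4_cont: "continuous_on {0..} (fd 4)"
    and integrable: "\<And>\<gamma> j. ereal \<gamma> > gamma_min f \<Longrightarrow> j \<le> 4 \<Longrightarrow>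
                     set_integrable lborel {0..} (\<lambda>x. exp (- \<gamma> * x) * fd j x)"
    and vanish: "\<And>\<gamma> j. ereal \<gamma> > gamma_min f \<Longrightarrow> j \<le> 4 \<Longrightarrow>
                     ((\<lambda>x. exp (- \<gamma> * x) * fd j x) \<longlongrightarrow> 0) at_top"
  shows "(\<forall>K. compact K \<and> K \<subseteq> {\<gamma>. ereal \<gamma> > gamma_min f} \<longrightarrow>
            (\<exists>C. \<forall>s \<gamma>. s \<ge> 1 \<and> \<gamma> \<in> K \<and> \<gamma> \<le> sqrt s \<longrightarrow>
               summable (\<lambda>n. f (real (n + 1) / sqrt s) * (1 - \<gamma> / sqrt s) ^ (n + 1)) \<and>
               \<bar>Fs f s (1 - \<gamma> / sqrt s) - (sqrt s * Lap f \<gamma> + Mcal f \<gamma>)\<bar> \<le> C / sqrt s))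
         \<and> (\<forall>\<gamma>. ereal \<gamma> > gamma_min f \<longrightarrow>
            ((\<lambda>s. sqrt s * (Fs f s (1 - \<gamma> / sqrt s) - (sqrt s * Lap f \<gamma> + Mcal f \<gamma>)))
               \<longlongrightarrow> Ncal f (fd 1 0) \<gamma>) at_top)"
proof -
  interpret laplace_profile f fd
    by unfold_locales (fact nonneg noninc f0 fd0 fd_deriv integrable vanish)+
  show ?thesis
    by (intro conjI allI impI; (elim conjE)?) (rule Fs_first_order Fs_second_order; assumption)+
qed

end
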